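(* Let $\mu>0$, $\beta\in[0,1]$, $x_0\in\mathbb R^n$ and $f\in\mathcal S^2_\mu(\mathbb R^n):=\bigcup_{L\ge\mu}\mathcal S^2_{\mu,L}(\mathbb R^n)$. For each $s>0$ the $\beta$-High Resolution ODE $$\ddot X_s+2\sqrt\mu\,\dot X_s+\beta\sqrt s\,\nabla^2 f(X_s)\dot X_s+(1+\sqrt{\mu s})\nabla f(X_s)=0,\quad X_s(0)=x_0,\ \dot X_s(0)=-\frac{2\sqrt s\,\nabla f(x_0)}{1+\sqrt{\mu s}},$$ has a unique global solution $X_s\in C^2([0,\infty);\mathbb R^n)$. Moreover, if $(x_k)_{k\ge0}$ (depending on $s$) is generated by $x_1=x_0-\frac{2s\nabla f(x_0)}{1+\sqrt{\mu s}}$ and, for $k\ge1$, $$x_{k+1}=x_k+\frac{1-\sqrt{\mu s}}{1+\sqrt{\mu s}}(x_k-x_{k-1})-s\nabla f(x_k)-\beta\frac{1-\sqrt{\mu s}}{1+\sqrt{\mu s}}s\big(\nabla f(x_k)-\nabla f(x_{k-1})\big),$$ then for any fixed $T>0$, $$\limsup_{s\to0}\max_{0\le k\le T/\sqrt s}\|x_k-X_s(k\sqrt s)\|=0.$$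
   Context: $\mathcal S^2_{\mu,L}(\mathbb R^n)$ is the class of twice differentiable, $\mu$-strongly convex functions $f:\mathbb R^n\to\mathbb R$ (i.e. $f(y)\ge f(x)+\langle\nabla f(x),y-x\rangle+\frac\mu2\|y-x\|^2$) whose gradient is $L$-Lipschitz and whose Hessian is Lipschitz in Frobenius norm ($\|\nabla^2f(x)-\nabla^2f(y)\|_F\le L'\|x-y\|$ for some $L'>0$), with $0<\mu\le L$. *)

theory Defs
  imports "HOL-Analysis.Analysis" "HOL-Library.Liminf_Limsup"
begin

text \<open>The norm on
  real^'n^'n is the Euclidean norm of all entries, i.e. the Frobenius norm.\<close>
definition S2_muL ::
  "real \<Rightarrow> real \<Rightarrow> (real^'n \<Rightarrow> real) \<Rightarrow> (real^'n \<Rightarrow> real^'n) \<Rightarrow> (real^'n \<Rightarrow> real^'n^'n) \<Rightarrow> bool"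
where
  "S2_muL \<mu> L f g H \<longleftrightarrow>
     0 < \<mu> \<and> \<mu> \<le> L \<and>
     (\<forall>x. (f has_derivative (\<lambda>h. g x \<bullet> h)) (at x)) \<and>
     (\<forall>x. (g has_derivative (\<lambda>h. H x *v h)) (at x)) \<and>
     (\<forall>x y. f y \<ge> f x + g x \<bullet> (y - x) + \<mu> / 2 * (norm (y - x))\<^sup>2) \<and>
     (\<forall>x y. norm (g x - g y) \<le> L * norm (x - y)) \<and>
     (\<exists>L'>0. \<forall>x y. norm (H x - H y) \<le> L' * norm (x - y))"

definition S2_mu ::
  "real \<Rightarrow> (real^'n \<Rightarrow> real) \<Rightarrow> (real^'n \<Rightarrow> real^'n) \<Rightarrow> (real^'n \<Rightarrow> real^'n^'n) \<Rightarrow> bool"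
where
  "S2_mu \<mu> f g H \<longleftrightarrow> (\<exists>L\<ge>\<mu>. S2_muL \<mu> L f g H)"

definition HR_solution ::
  "real \<Rightarrow> real \<Rightarrow> real \<Rightarrow> (real^'n \<Rightarrow> real^'n) \<Rightarrow> (real^'n \<Rightarrow> real^'n^'n) \<Rightarrow> real^'n
   \<Rightarrow> (real \<Rightarrow> real^'n) \<Rightarrow> bool"
where
  "HR_solution \<mu> \<beta> s g H x0 X \<longleftrightarrow>
     (\<exists>X' X''.
        (\<forall>t\<ge>0. (X has_vector_derivative X' t) (at t within {0..})) \<and>
        (\<forall>t\<ge>0. (X' has_vector_derivative X'' t) (at t within {0..})) \<and>
        continuous_on {0..} X'' \<and>
        (\<forall>t\<ge>0. X'' t + (2 * sqrt \<mu>) *\<^sub>R X' t + (\<beta> * sqrt s) *\<^sub>R (H (X t) *v X' t)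
                   + (1 + sqrt (\<mu> * s)) *\<^sub>R g (X t) = 0) \<and>
        X 0 = x0 \<and>
        X' 0 = - ((2 * sqrt s) / (1 + sqrt (\<mu> * s))) *\<^sub>R g x0)"

text \<open>Pairs (x_k, x_{k+1}) of the discrete scheme.\<close>
fun HR_pair ::
  "real \<Rightarrow> real \<Rightarrow> real \<Rightarrow> (real^'n \<Rightarrow> real^'n) \<Rightarrow> real^'n \<Rightarrow> nat \<Rightarrow> (real^'n) \<times> (real^'n)"
where
  "HR_pair \<mu> \<beta> s g x0 0 = (x0, x0 - ((2 * s) / (1 + sqrt (\<mu> * s))) *\<^sub>R g x0)"
| "HR_pair \<mu> \<beta> s g x0 (Suc k) =
     (let (xp, xk) = HR_pair \<mu> \<beta> s g x0 k;
          c = (1 - sqrt (\<mu> * s)) / (1 + sqrt (\<mu> * s))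
      in (xk, xk + c *\<^sub>R (xk - xp) - s *\<^sub>R g xk - (\<beta> * c * s) *\<^sub>R (g xk - g xp)))"

definition HR_seq ::
  "real \<Rightarrow> real \<Rightarrow> real \<Rightarrow> (real^'n \<Rightarrow> real^'n) \<Rightarrow> real^'n \<Rightarrow> nat \<Rightarrow> real^'n"
where
  "HR_seq \<mu> \<beta> s g x0 k = fst (HR_pair \<mu> \<beta> s g x0 k)"

end

theory Submission
  imports Defs
begin

text \<open>With \<open>h = sqrt s\<close> and \<open>W = X' + \<beta> h \<nabla>f(X)\<close> the \<beta>-HR ODE becomes a first-order system
  \<open>(X, W)' = F\<^sub>h (X, W)\<close> in which the Hessian term has disappeared into \<open>W'\<close>; \<open>F\<^sub>h\<close> is globally
  Lipschitz with a constant that is uniform in \<open>h \<le> 1\<close>. Banach's fixed point theorem for the Picard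
  operator in the exponentially weighted sup norm gives a unique global solution together with a
  bound \<open>C e\<^sup>2\<^sup>K\<^sup>t\<close>. In the variables \<open>x\<^sub>k\<close> and \<open>v\<^sub>k = (x\<^sub>k\<^sub>+\<^sub>1 - x\<^sub>k) / h + \<beta> h \<nabla>f(x\<^sub>k)\<close> the scheme is
  a one-step method that is stable with factor \<open>1 + O(h)\<close> and consistent with the system up to
  \<open>O(h\<^sup>2)\<close> per step, uniformly on \<open>[0, T]\<close>; summing the propagated local errors over the
  \<open>T / h\<close> steps bounds the global error by \<open>O(h) = O(sqrt s)\<close>.\<close>

section \<open>Integral equations of Lipschitz vector fields\<close>

lemma has_integral_scaled_exp:
  fixes A lam u :: real
  assumes u: "0 \<le> u" and lam: "0 < lam"
  shows "((\<lambda>\<tau>. A * exp (lam * \<tau>)) has_integral A * (exp (lam * u) - 1) / lam) {0..u}"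
proof -
  have "((\<lambda>\<tau>. A * exp (lam * \<tau>) / lam) has_real_derivative A * (exp (lam * \<tau>) * lam) / lam)
      (at \<tau> within {0..u})" for \<tau>
    by (auto intro!: derivative_eq_intros)
  then have "((\<lambda>\<tau>. A * exp (lam * \<tau>) / lam) has_vector_derivative A * exp (lam * \<tau>)) (at \<tau> within {0..u})"
    for \<tau>
    using lam by (simp add: has_real_derivative_iff_has_vector_derivative)
  then have "((\<lambda>\<tau>. A * exp (lam * \<tau>)) has_integral A * exp (lam * u) / lam - A * exp (lam * 0) / lam) {0..u}"
    by (intro fundamental_theorem_of_calculus[OF u])
  then show ?thesis by (simp add: diff_divide_distrib right_diff_distrib)
qed

lemma norm_weighted_integral_le:
  fixes G :: "real \<Rightarrow> 'a::banach"
  assumes u: "0 \<le> u" and lam: "0 < lam" and G: "continuous_on {0..u} G"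
    and bound: "\<And>\<tau>. \<tau> \<in> {0..u} \<Longrightarrow> norm (G \<tau>) \<le> A * exp (lam * \<tau>)"
  shows "norm (exp (- (lam * u)) *\<^sub>R (z + integral {0..u} G)) \<le> norm z + A / lam"
proof -
  have "norm (G 0) \<le> A" using bound[of 0] u by simp
  then have A: "0 \<le> A" using norm_ge_zero[of "G 0"] by linarith
  note int_exp = has_integral_scaled_exp[OF u lam, of A]
  have "norm (integral {0..u} G) \<le> A * (exp (lam * u) - 1) / lam"
    using integral_norm_bound_integral[OF integrable_continuous_interval[OF G]
        has_integral_integrable[OF int_exp] bound] integral_unique[OF int_exp] by simp
  then have "norm (z + integral {0..u} G) \<le> norm z + A * (exp (lam * u) - 1) / lam"
    using norm_triangle_ineq[of z "integral {0..u} G"] by linarith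
  then have "norm (exp (- (lam * u)) *\<^sub>R (z + integral {0..u} G))
      \<le> exp (- (lam * u)) * (norm z + A * (exp (lam * u) - 1) / lam)"
    by (simp add: mult_left_mono)
  also have "\<dots> = exp (- (lam * u)) * norm z + A * (1 - exp (- (lam * u))) / lam"
    using lam by (simp add: exp_minus field_simps)
  also have "\<dots> \<le> norm z + A / lam"
  proof -
    have "exp (- (lam * u)) * norm z \<le> norm z"
      using u lam by (simp add: mult_left_le_one_le)
    moreover have "A * (1 - exp (- (lam * u))) \<le> A * 1"
      using A by (intro mult_left_mono) auto
    ultimately show ?thesis using lam by (simp add: divide_right_mono add_mono)
  qed
  finally show ?thesis .
qed

lemma has_vector_derivative_integral_from_0:
  fixes G :: "real \<Rightarrow> 'a::banach"
  assumes "continuous_on {0..} G" "0 \<le> t"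
  shows "((\<lambda>u. integral {0..u} G) has_vector_derivative G t) (at t within {0..})"
proof -
  have "((\<lambda>u. integral {0..u} G) has_vector_derivative G t) (at t within {0..t+1})"
    by (rule integral_has_vector_derivative, rule continuous_on_subset[OF assms(1)]) (use assms in auto)
  moreover have "at t within {0..} = at t within {0..t+1}"
    by (rule at_within_nhd[where S="{..<t+1}"]) auto
  ultimately show ?thesis by simp
qed

lemma continuous_on_integral_from_0:
  fixes G :: "real \<Rightarrow> 'a::banach"
  assumes "continuous_on {0..} G"
  shows "continuous_on {0..} (\<lambda>u. integral {0..u} G)"
  unfolding continuous_on_eq_continuous_within
  using has_vector_derivative_continuous[OF has_vector_derivative_integral_from_0[OF assms]] by auto

definition integral_solution :: "('a::banach \<Rightarrow> 'a) \<Rightarrow> 'a \<Rightarrow> (real \<Rightarrow> 'a) \<Rightarrow> bool" where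
  "integral_solution F z0 z \<longleftrightarrow>
     continuous_on {0..} z \<and> (\<forall>t\<ge>0. z t = z0 + integral {0..t} (\<lambda>\<tau>. F (z \<tau>)))"

lemma has_vector_derivative_imp_integral_solution:
  fixes z :: "real \<Rightarrow> 'a::banach"
  assumes "\<And>t. 0 \<le> t \<Longrightarrow> (z has_vector_derivative F (z t)) (at t within {0..})"
  shows "integral_solution F (z 0) z"
  unfolding integral_solution_def
proof safe
  show "continuous_on {0..} z"
    unfolding continuous_on_eq_continuous_within
    by (auto intro: has_vector_derivative_continuous assms)
  fix t :: real assume t: "0 \<le> t"
  have "((\<lambda>\<tau>. F (z \<tau>)) has_integral z t - z 0) {0..t}"
    by (rule fundamental_theorem_of_calculus[OF t])
       (auto intro: has_vector_derivative_within_subset[OF assms])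
  then show "z t = z 0 + integral {0..t} (\<lambda>\<tau>. F (z \<tau>))"
    by (simp add: integral_unique)
qed

lemma norm_le_lipschitz:
  assumes "\<And>x y. norm (f x - f y) \<le> L * norm (x - y)"
  shows "norm (f x) \<le> norm (f 0) + L * norm x"
  using norm_triangle_sub[of "f x" "f 0"] assms[of x 0] by simp

locale lipschitz_field =
  fixes F :: "'a::banach \<Rightarrow> 'a" and K :: real
  assumes K_pos: "0 < K" and lipschitz: "norm (F x - F y) \<le> K * norm (x - y)"
begin

lemma continuous_on_F: "continuous_on S F"
  by (rule lipschitz_on_continuous_on[where L=K])
     (use lipschitz K_pos in \<open>auto intro!: lipschitz_onI simp: dist_norm\<close>)

lemma norm_F_le: "norm (F x) \<le> norm (F 0) + K * norm x"
  by (rule norm_le_lipschitz[OF lipschitz])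

lemma continuous_on_F_weighted:
  "continuous_on S \<phi> \<Longrightarrow> continuous_on S (\<lambda>\<tau>. F (exp (2*K*\<tau>) *\<^sub>R \<phi> \<tau>))"
  by (intro continuous_on_compose2[OF continuous_on_F[of UNIV]] continuous_intros) auto

text \<open>The Picard operator of \<open>z' = F z\<close> in the variable \<open>\<phi> t = exp (-2 K t) z t\<close>, run with the
  clock \<open>c\<close> (the identity or a clamped identity, so that it acts on functions on the whole line).
  The exponential weight makes it a 1/2-contraction in the sup norm.\<close>
definition weighted_picard :: "(real \<Rightarrow> real) \<Rightarrow> 'a \<Rightarrow> (real \<Rightarrow> 'a) \<Rightarrow> real \<Rightarrow> 'a" where
  "weighted_picard c z0 \<phi> t =
     exp (- (2*K * c t)) *\<^sub>R (z0 + integral {0..c t} (\<lambda>\<tau>. F (exp (2*K*\<tau>) *\<^sub>R \<phi> \<tau>)))"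

lemma weighted_picard_bound:
  assumes c: "0 \<le> c t" and \<phi>: "continuous_on UNIV \<phi>" and B: "\<And>t. norm (\<phi> t) \<le> B"
  shows "norm (weighted_picard c z0 \<phi> t) \<le> norm z0 + (norm (F 0) + K * B) / (2*K)"
  unfolding weighted_picard_def
proof (rule norm_weighted_integral_le[OF c])
  show "continuous_on {0..c t} (\<lambda>\<tau>. F (exp (2*K*\<tau>) *\<^sub>R \<phi> \<tau>))"
    by (rule continuous_on_F_weighted, rule continuous_on_subset[OF \<phi>]) auto
  fix \<tau> assume "\<tau> \<in> {0..c t}"
  then have e: "1 \<le> exp (2*K*\<tau>)" using K_pos by simp
  have "norm (F (exp (2*K*\<tau>) *\<^sub>R \<phi> \<tau>)) \<le> norm (F 0) + K * (exp (2*K*\<tau>) * norm (\<phi> \<tau>))"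
    using norm_F_le[of "exp (2*K*\<tau>) *\<^sub>R \<phi> \<tau>"] by simp
  also have "\<dots> \<le> norm (F 0) * exp (2*K*\<tau>) + K * (exp (2*K*\<tau>) * B)"
    using e B[of \<tau>] K_pos by (intro add_mono mult_left_mono) (auto simp: mult_le_cancel_left1)
  finally show "norm (F (exp (2*K*\<tau>) *\<^sub>R \<phi> \<tau>)) \<le> (norm (F 0) + K * B) * exp (2*K*\<tau>)"
    by (simp add: algebra_simps)
qed (use K_pos in simp)

lemma weighted_picard_contraction:
  assumes c: "0 \<le> c t" and \<phi>: "continuous_on UNIV \<phi>" and \<psi>: "continuous_on UNIV \<psi>"
    and D: "\<And>t. norm (\<phi> t - \<psi> t) \<le> D"
  shows "norm (weighted_picard c z0 \<phi> t - weighted_picard c z0 \<psi> t) \<le> D / 2"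
proof -
  let ?G = "\<lambda>\<phi> \<tau>. F (exp (2*K*\<tau>) *\<^sub>R \<phi> \<tau>)"
  have cont: "continuous_on {0..c t} (?G \<phi>)" "continuous_on {0..c t} (?G \<psi>)"
    by (auto intro!: continuous_on_F_weighted continuous_on_subset[OF \<phi>] continuous_on_subset[OF \<psi>])
  have "integral {0..c t} (?G \<phi>) - integral {0..c t} (?G \<psi>)
      = integral {0..c t} (\<lambda>\<tau>. ?G \<phi> \<tau> - ?G \<psi> \<tau>)"
    by (rule integral_diff[symmetric]) (use cont integrable_continuous_interval in auto)
  then have "weighted_picard c z0 \<phi> t - weighted_picard c z0 \<psi> t
      = exp (- (2*K * c t)) *\<^sub>R (0 + integral {0..c t} (\<lambda>\<tau>. ?G \<phi> \<tau> - ?G \<psi> \<tau>))"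
    unfolding weighted_picard_def scaleR_diff_right[symmetric] by simp
  moreover have "norm (exp (- (2*K * c t)) *\<^sub>R (0 + integral {0..c t} (\<lambda>\<tau>. ?G \<phi> \<tau> - ?G \<psi> \<tau>)))
      \<le> norm (0::'a) + K * D / (2*K)"
  proof (rule norm_weighted_integral_le[OF c])
    show "continuous_on {0..c t} (\<lambda>\<tau>. ?G \<phi> \<tau> - ?G \<psi> \<tau>)"
      using cont by (intro continuous_intros)
    fix \<tau>
    have "norm (?G \<phi> \<tau> - ?G \<psi> \<tau>) \<le> K * norm (exp (2*K*\<tau>) *\<^sub>R \<phi> \<tau> - exp (2*K*\<tau>) *\<^sub>R \<psi> \<tau>)"
      by (rule lipschitz)
    also have "\<dots> = K * (exp (2*K*\<tau>) * norm (\<phi> \<tau> - \<psi> \<tau>))"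
      by (simp flip: scaleR_diff_right)
    also have "\<dots> \<le> K * D * exp (2*K*\<tau>)"
      using D[of \<tau>] K_pos by (simp add: mult_left_mono)
    finally show "norm (?G \<phi> \<tau> - ?G \<psi> \<tau>) \<le> K * D * exp (2*K*\<tau>)" .
  qed (use K_pos in simp)
  ultimately show ?thesis using K_pos by simp
qed

lemma weighted_picard_bcontfun:
  assumes c: "continuous_on UNIV c" "\<And>t. 0 \<le> c t"
  shows "weighted_picard c z0 (apply_bcontfun \<phi>) \<in> bcontfun"
proof (rule bcontfun_normI)
  let ?G = "\<lambda>\<tau>. F (exp (2*K*\<tau>) *\<^sub>R apply_bcontfun \<phi> \<tau>)"
  have "continuous_on {0..} (\<lambda>u. integral {0..u} ?G)"
    by (intro continuous_on_integral_from_0 continuous_on_F_weighted) simp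
  then have "continuous_on UNIV (\<lambda>t. integral {0..c t} ?G)"
    by (rule continuous_on_compose2[OF _ c(1)]) (use c(2) in auto)
  then show "continuous_on UNIV (weighted_picard c z0 (apply_bcontfun \<phi>))"
    unfolding weighted_picard_def by (intro continuous_intros c(1))
  show "norm (weighted_picard c z0 (apply_bcontfun \<phi>) t) \<le> norm z0 + (norm (F 0) + K * norm \<phi>) / (2*K)"
    for t
    by (rule weighted_picard_bound) (auto simp: c(2) norm_bounded)
qed

lemma weighted_picard_fixpoint:
  assumes c: "continuous_on UNIV c" "\<And>t. 0 \<le> c t"
  shows "\<exists>!\<phi>::real \<Rightarrow>\<^sub>C 'a. weighted_picard c z0 (apply_bcontfun \<phi>) = apply_bcontfun \<phi>"
proof -
  define P where "P \<phi> = Bcontfun (weighted_picard c z0 (apply_bcontfun \<phi>))" for \<phi> :: "real \<Rightarrow>\<^sub>C 'a"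
  have apply_P: "apply_bcontfun (P \<phi>) = weighted_picard c z0 (apply_bcontfun \<phi>)" for \<phi>
    unfolding P_def by (rule Bcontfun_inverse[OF weighted_picard_bcontfun[OF c]])
  have "\<exists>!\<phi>. P \<phi> = \<phi>"
  proof (rule banach_fix_type[of "1/2"])
    show "\<forall>\<phi> \<psi>. dist (P \<phi>) (P \<psi>) \<le> 1/2 * dist \<phi> \<psi>"
    proof (intro allI dist_bound)
      fix \<phi> \<psi> :: "real \<Rightarrow>\<^sub>C 'a" and t
      have "norm (weighted_picard c z0 \<phi> t - weighted_picard c z0 \<psi> t) \<le> dist \<phi> \<psi> / 2"
        by (rule weighted_picard_contraction) (auto simp: c(2) dist_norm[symmetric] dist_bounded)
      then show "dist (P \<phi> t) (P \<psi> t) \<le> 1/2 * dist \<phi> \<psi>"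
        by (simp add: apply_P dist_norm)
    qed
  qed simp_all
  moreover have "P \<phi> = \<phi> \<longleftrightarrow> weighted_picard c z0 (apply_bcontfun \<phi>) = apply_bcontfun \<phi>" for \<phi>
  proof
    assume "P \<phi> = \<phi>"
    then show "weighted_picard c z0 (apply_bcontfun \<phi>) = apply_bcontfun \<phi>" by (simp flip: apply_P)
  next
    assume "weighted_picard c z0 (apply_bcontfun \<phi>) = apply_bcontfun \<phi>"
    then show "P \<phi> = \<phi>" by (simp add: P_def apply_bcontfun_inverse)
  qed
  ultimately show ?thesis by simp
qed

lemma weighted_picard_fixpoint_unique:
  assumes c: "continuous_on UNIV c" "\<And>t. 0 \<le> c t"
    and \<psi>: "\<psi> \<in> bcontfun" "weighted_picard c z0 \<psi> = \<psi>"
    and \<psi>': "\<psi>' \<in> bcontfun" "weighted_picard c z0 \<psi>' = \<psi>'"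
  shows "\<psi> = \<psi>'"
proof -
  obtain \<phi> where unique: "\<And>\<theta>. weighted_picard c z0 (apply_bcontfun \<theta>) = apply_bcontfun \<theta> \<Longrightarrow> \<theta> = \<phi>"
    using weighted_picard_fixpoint[OF c, of z0] by blast
  have "Bcontfun \<psi> = \<phi>" "Bcontfun \<psi>' = \<phi>"
    by (auto intro!: unique simp: Bcontfun_inverse \<psi> \<psi>')
  then have "apply_bcontfun (Bcontfun \<psi>) = apply_bcontfun (Bcontfun \<psi>')" by simp
  then show ?thesis by (simp only: Bcontfun_inverse[OF \<psi>(1)] Bcontfun_inverse[OF \<psi>'(1)])
qed

lemma weighted_picard_fixpoint_bound:
  assumes c: "\<And>t. 0 \<le> c t" and \<psi>: "\<psi> \<in> bcontfun" "weighted_picard c z0 \<psi> = \<psi>"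
  shows "norm (\<psi> t) \<le> 2 * norm z0 + norm (F 0) / K"
proof -
  let ?B = "norm (Bcontfun \<psi>)"
  have apply_B: "apply_bcontfun (Bcontfun \<psi>) = \<psi>" by (rule Bcontfun_inverse[OF \<psi>(1)])
  have bounded: "norm (\<psi> s) \<le> ?B" for s
    using norm_bounded[of "Bcontfun \<psi>" s] unfolding apply_B .
  have "?B \<le> norm z0 + (norm (F 0) + K * ?B) / (2*K)"
  proof (rule norm_bound)
    fix t
    have "norm (weighted_picard c z0 \<psi> t) \<le> norm z0 + (norm (F 0) + K * ?B) / (2*K)"
      by (rule weighted_picard_bound) (use c \<psi> bounded in \<open>auto simp: bcontfun_def\<close>)
    then show "norm (Bcontfun \<psi> t) \<le> norm z0 + (norm (F 0) + K * ?B) / (2*K)"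
      unfolding apply_B \<psi>(2) .
  qed
  then have "?B \<le> 2 * norm z0 + norm (F 0) / K" using K_pos by (simp add: field_simps)
  with bounded[of t] show ?thesis by linarith
qed

lemma integral_solution_exists: "\<exists>z. integral_solution F z0 z"
proof -
  have c: "continuous_on UNIV (\<lambda>t::real. max 0 t)" by (intro continuous_intros)
  obtain \<phi> :: "real \<Rightarrow>\<^sub>C 'a" where fixed: "weighted_picard (\<lambda>t. max 0 t) z0 \<phi> = \<phi>"
    using weighted_picard_fixpoint[OF c max.cobounded1, of z0] by blast
  define z where "z t = exp (2*K*t) *\<^sub>R \<phi> t" for t
  have "z t = z0 + integral {0..t} (\<lambda>\<tau>. F (z \<tau>))" if "0 \<le> t" for t
  proof -
    have "\<phi> t = exp (- (2*K*t)) *\<^sub>R (z0 + integral {0..t} (\<lambda>\<tau>. F (z \<tau>)))"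
      using fun_cong[OF fixed, of t] that by (simp add: weighted_picard_def z_def)
    then show ?thesis by (simp add: z_def exp_minus_inverse)
  qed
  moreover have "continuous_on {0..} z" unfolding z_def by (intro continuous_intros continuous_on_apply_bcontfun)
  ultimately show ?thesis unfolding integral_solution_def by blast
qed

text \<open>Clamping the clock at \<open>N\<close> makes every solution a bounded fixed point; uniqueness and the
  growth bound of solutions are read off from this.\<close>
lemma integral_solution_clamped_fixpoint:
  assumes z: "integral_solution F z0 z" and N: "0 \<le> N"
  defines "c \<equiv> \<lambda>t. max 0 (min N t)"
  shows "continuous_on UNIV c" and "\<And>t. 0 \<le> c t"
    and "(\<lambda>t. exp (- (2*K * c t)) *\<^sub>R z (c t)) \<in> bcontfun"
    and "weighted_picard c z0 (\<lambda>t. exp (- (2*K * c t)) *\<^sub>R z (c t)) = (\<lambda>t. exp (- (2*K * c t)) *\<^sub>R z (c t))"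
proof -
  let ?\<psi> = "\<lambda>t. exp (- (2*K * c t)) *\<^sub>R z (c t)"
  show cc: "continuous_on UNIV c" unfolding c_def by (intro continuous_intros)
  show c0: "0 \<le> c t" for t unfolding c_def by simp
  have zc: "continuous_on {0..} z" using z by (simp add: integral_solution_def)
  have "continuous_on UNIV (\<lambda>t. z (c t))"
    by (rule continuous_on_compose2[OF zc cc]) (use c0 in auto)
  then have "continuous_on UNIV ?\<psi>" by (intro continuous_intros cc)
  moreover have "bounded (range ?\<psi>)"
  proof (rule bounded_subset)
    show "bounded ((\<lambda>u. exp (- (2*K * u)) *\<^sub>R z u) ` {0..N})"
      by (intro compact_imp_bounded compact_continuous_image continuous_intros continuous_on_subset[OF zc])
         auto
    have "range c \<subseteq> {0..N}" unfolding c_def using N by auto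
    then have "(\<lambda>u. exp (- (2*K * u)) *\<^sub>R z u) ` range c \<subseteq> (\<lambda>u. exp (- (2*K * u)) *\<^sub>R z u) ` {0..N}"
      by (rule image_mono)
    then show "range ?\<psi> \<subseteq> (\<lambda>u. exp (- (2*K * u)) *\<^sub>R z u) ` {0..N}"
      by (simp add: image_image)
  qed
  ultimately show "?\<psi> \<in> bcontfun" unfolding bcontfun_def by simp
  show "weighted_picard c z0 ?\<psi> = ?\<psi>"
  proof
    fix t
    have same_integral: "integral {0..c t} (\<lambda>\<tau>. F (exp (2*K*\<tau>) *\<^sub>R ?\<psi> \<tau>))
        = integral {0..c t} (\<lambda>\<tau>. F (z \<tau>))"
    proof (rule integral_cong)
      fix \<tau> assume "\<tau> \<in> {0..c t}"
      then have "c \<tau> = \<tau>" unfolding c_def by auto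
      then show "F (exp (2*K*\<tau>) *\<^sub>R ?\<psi> \<tau>) = F (z \<tau>)" by (simp add: exp_minus_inverse)
    qed
    have "z (c t) = z0 + integral {0..c t} (\<lambda>\<tau>. F (z \<tau>))"
      using z c0[of t] by (simp add: integral_solution_def)
    then show "weighted_picard c z0 ?\<psi> t = ?\<psi> t"
      unfolding weighted_picard_def same_integral by (simp only:)
  qed
qed

lemma integral_solution_unique:
  assumes "integral_solution F z0 z" "integral_solution F z0 z'" "0 \<le> t"
  shows "z t = z' t"
proof -
  note A = integral_solution_clamped_fixpoint[OF assms(1,3)]
  note B = integral_solution_clamped_fixpoint[OF assms(2,3)]
  have "(\<lambda>s. exp (- (2*K * max 0 (min t s))) *\<^sub>R z (max 0 (min t s)))
      = (\<lambda>s. exp (- (2*K * max 0 (min t s))) *\<^sub>R z' (max 0 (min t s)))"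
    by (rule weighted_picard_fixpoint_unique[OF A B(3,4)])
  from fun_cong[OF this, of t] show ?thesis using assms(3) by simp
qed

lemma integral_solution_bound:
  assumes "integral_solution F z0 z" "0 \<le> t"
  shows "norm (z t) \<le> (2 * norm z0 + norm (F 0) / K) * exp (2*K*t)"
proof -
  note A = integral_solution_clamped_fixpoint[OF assms]
  have "exp (- (2*K*t)) * norm (z t) \<le> 2 * norm z0 + norm (F 0) / K"
    using weighted_picard_fixpoint_bound[OF A(2-4), of t] assms(2) by simp
  then show ?thesis by (simp add: exp_minus field_simps)
qed

lemma integral_solution_continuous_on_F:
  assumes "integral_solution F z0 z" "S \<subseteq> {0..}"
  shows "continuous_on S (\<lambda>\<tau>. F (z \<tau>))"
proof -
  have "continuous_on S z"
    using assms continuous_on_subset unfolding integral_solution_def by blast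
  then show ?thesis by (rule continuous_on_compose2[OF continuous_on_F[of UNIV]]) auto
qed

lemma integral_solution_has_vector_derivative:
  assumes z: "integral_solution F z0 z" and t: "0 \<le> t"
  shows "(z has_vector_derivative F (z t)) (at t within {0..})"
proof -
  have "((\<lambda>u. z0 + integral {0..u} (\<lambda>\<tau>. F (z \<tau>))) has_vector_derivative F (z t)) (at t within {0..})"
    using has_vector_derivative_add[OF has_vector_derivative_const
        has_vector_derivative_integral_from_0[OF integral_solution_continuous_on_F[OF z order.refl] t]]
    by simp
  then show ?thesis
    by (rule has_vector_derivative_transform[rotated 2]) (use t z in \<open>auto simp: integral_solution_def\<close>)
qed

lemma integral_solution_increment:
  assumes z: "integral_solution F z0 z" and t: "0 \<le> t" "t \<le> u"
  shows "z u - z t = integral {t..u} (\<lambda>\<tau>. F (z \<tau>))"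
proof -
  have "(\<lambda>\<tau>. F (z \<tau>)) integrable_on {0..u}"
    by (intro integrable_continuous_interval integral_solution_continuous_on_F[OF z]) auto
  then have "integral {0..t} (\<lambda>\<tau>. F (z \<tau>)) + integral {t..u} (\<lambda>\<tau>. F (z \<tau>)) = integral {0..u} (\<lambda>\<tau>. F (z \<tau>))"
    by (rule Henstock_Kurzweil_Integration.integral_combine[OF t])
  moreover have "z u = z0 + integral {0..u} (\<lambda>\<tau>. F (z \<tau>))" "z t = z0 + integral {0..t} (\<lambda>\<tau>. F (z \<tau>))"
    using z t unfolding integral_solution_def by auto
  ultimately show ?thesis by (simp add: algebra_simps)
qed

lemma integral_solution_increment_bound:
  assumes z: "integral_solution F z0 z" and t: "0 \<le> t" "t \<le> u"
    and M: "\<And>\<tau>. \<tau> \<in> {t..u} \<Longrightarrow> norm (F (z \<tau>)) \<le> M"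
  shows "norm (z u - z t) \<le> M * (u - t)"
  unfolding integral_solution_increment[OF z t]
  by (rule integral_bound[OF t(2) integral_solution_continuous_on_F[OF z] M]) (use t in auto)

lemma integral_solution_euler_step:
  assumes z: "integral_solution F z0 z" and t: "0 \<le> t" and h: "0 \<le> h"
    and M: "\<And>\<tau>. \<tau> \<in> {t..t+h} \<Longrightarrow> norm (F (z \<tau>)) \<le> M"
  shows "norm (z (t+h) - z t - h *\<^sub>R F (z t)) \<le> K * M * h\<^sup>2"
proof -
  have cont: "continuous_on {t..t+h} (\<lambda>\<tau>. F (z \<tau>))"
    by (rule integral_solution_continuous_on_F[OF z]) (use t in auto)
  have "norm (F (z t)) \<le> M" using M h by simp
  then have M0: "0 \<le> M" using norm_ge_zero[of "F (z t)"] by linarith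
  have "z (t+h) - z t - h *\<^sub>R F (z t) = integral {t..t+h} (\<lambda>\<tau>. F (z \<tau>)) - integral {t..t+h} (\<lambda>\<tau>. F (z t))"
    using integral_solution_increment[OF z t] h by simp
  also have "\<dots> = integral {t..t+h} (\<lambda>\<tau>. F (z \<tau>) - F (z t))"
    by (rule integral_diff[symmetric]) (auto intro: integrable_continuous_interval cont)
  also have "norm \<dots> \<le> (K * (M * h)) * (t + h - t)"
  proof (rule integral_bound)
    fix \<tau> assume \<tau>: "\<tau> \<in> {t..t+h}"
    have "norm (z \<tau> - z t) \<le> M * (\<tau> - t)"
      by (rule integral_solution_increment_bound[OF z t]) (use \<tau> M in auto)
    also have "\<dots> \<le> M * h"
      using \<tau> M0 by (intro mult_left_mono) auto
    finally have "K * norm (z \<tau> - z t) \<le> K * (M * h)"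
      using K_pos by (intro mult_left_mono) auto
    then show "norm (F (z \<tau>) - F (z t)) \<le> K * (M * h)"
      using lipschitz[of "z \<tau>" "z t"] by linarith
  qed (use h in \<open>auto intro: continuous_on_diff cont continuous_on_const\<close>)
  finally show ?thesis by (simp add: power2_eq_square mult.assoc)
qed

end

section \<open>Error propagation in one-step methods\<close>

lemma one_step_global_error:
  fixes \<Phi> :: "'a \<Rightarrow> 'a" and d :: "'a \<Rightarrow> 'a \<Rightarrow> real" and y Y :: "nat \<Rightarrow> 'a"
  assumes triangle: "\<And>u v w. d u w \<le> d u v + d v w"
    and stable: "\<And>u v. d (\<Phi> u) (\<Phi> v) \<le> (1 + h * Q) * d u v"
    and consistent: "\<And>k. k < n \<Longrightarrow> d (\<Phi> (Y k)) (Y (Suc k)) \<le> \<delta>"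
    and start: "d (y 0) (Y 0) \<le> 0" and step: "\<And>k. y (Suc k) = \<Phi> (y k)"
    and h: "0 \<le> h" and Q: "0 \<le> Q" and \<delta>: "0 \<le> \<delta>"
  shows "d (y n) (Y n) \<le> real n * \<delta> * exp (real n * h * Q)"
  using consistent
proof (induction n)
  case 0
  then show ?case using start by simp
next
  case (Suc n)
  let ?E = "real n * \<delta> * exp (real n * h * Q)"
  have IH: "d (y n) (Y n) \<le> ?E" using Suc by simp
  have "d (y (Suc n)) (Y (Suc n)) \<le> (1 + h * Q) * d (y n) (Y n) + \<delta>"
    using triangle[where u="\<Phi> (y n)" and v="\<Phi> (Y n)" and w="Y (Suc n)"] stable[of "y n" "Y n"] Suc.prems[of n]
    unfolding step by simp
  also have "\<dots> \<le> exp (h * Q) * ?E + \<delta> * exp (real (Suc n) * h * Q)"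
  proof (rule add_mono)
    have "(1 + h * Q) * d (y n) (Y n) \<le> (1 + h * Q) * ?E"
      using IH h Q by (intro mult_left_mono) auto
    also have "\<dots> \<le> exp (h * Q) * ?E"
      using \<delta> by (intro mult_right_mono exp_ge_add_one_self) auto
    finally show "(1 + h * Q) * d (y n) (Y n) \<le> exp (h * Q) * ?E" .
    show "\<delta> \<le> \<delta> * exp (real (Suc n) * h * Q)"
      using \<delta> h Q by (simp add: mult_le_cancel_left1)
  qed
  also have "\<dots> = real (Suc n) * \<delta> * exp (real (Suc n) * h * Q)"
    by (simp add: algebra_simps flip: exp_add)
  finally show ?case .
qed

definition semi_implicit_step ::
  "real \<Rightarrow> real \<Rightarrow> real \<Rightarrow> real \<Rightarrow> ('a::real_normed_vector \<Rightarrow> 'a) \<Rightarrow> 'a \<times> 'a \<Rightarrow> 'a \<times> 'a"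
where
  "semi_implicit_step h \<beta> b c g z =
     (let x' = fst z + h *\<^sub>R snd z - (\<beta> * h\<^sup>2) *\<^sub>R g (fst z) in (x', c *\<^sub>R snd z - (h * b) *\<^sub>R g x'))"

text \<open>The \<open>l\<^sub>1\<close> distance on pairs: position and velocity errors then propagate additively.\<close>
definition dist_sum :: "'a::real_normed_vector \<times> 'a \<Rightarrow> 'a \<times> 'a \<Rightarrow> real" where
  "dist_sum z z' = norm (fst z - fst z') + norm (snd z - snd z')"

lemma dist_sum_triangle: "dist_sum u w \<le> dist_sum u v + dist_sum v w"
  unfolding dist_sum_def
  using norm_triangle_ineq[of "fst u - fst v" "fst v - fst w"] norm_triangle_ineq[of "snd u - snd v" "snd v - snd w"]
  by simp

lemma norm_diff4_le:
  fixes A B C D :: "'a::real_normed_vector"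
  shows "norm (A - B - C - D) \<le> norm A + norm B + norm C + norm D"
  using norm_triangle_ineq4[of "A - B - C" D] norm_triangle_ineq4[of "A - B" C] norm_triangle_ineq4[of A B]
  by linarith

lemma stability_factor_bounds:
  fixes h L :: real
  assumes h: "0 \<le> h" "h \<le> 1" and L: "0 \<le> L"
  shows "(1 + h * L)\<^sup>2 \<le> 1 + h * (1 + L)\<^sup>2" and "(1 + h * L) * h + 1 \<le> 1 + h * (1 + L)\<^sup>2"
proof -
  have "h * h * L\<^sup>2 \<le> h * L\<^sup>2" "h * h * L \<le> h * L" "0 \<le> h * L\<^sup>2" "0 \<le> h * L"
    using mult_right_mono[OF h(2), of "h * L\<^sup>2"] mult_right_mono[OF h(2), of "h * L"] h L
    by (simp_all add: mult.assoc)
  moreover have "(1 + h * L)\<^sup>2 = 1 + 2 * (h * L) + h * h * L\<^sup>2" "(1 + h * L) * h + 1 = 1 + h + h * h * L"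
    "1 + h * (1 + L)\<^sup>2 = 1 + h + 2 * (h * L) + h * L\<^sup>2"
    by (simp_all add: power2_eq_square algebra_simps)
  ultimately show "(1 + h * L)\<^sup>2 \<le> 1 + h * (1 + L)\<^sup>2" "(1 + h * L) * h + 1 \<le> 1 + h * (1 + L)\<^sup>2"
    using h by linarith+
qed

lemma semi_implicit_step_stable:
  fixes g :: "'a::real_normed_vector \<Rightarrow> 'a"
  assumes g: "\<And>u w. norm (g u - g w) \<le> L * norm (u - w)" and L: "0 \<le> L"
    and h: "0 < h" "h \<le> 1" and \<beta>: "0 \<le> \<beta>" "\<beta> \<le> 1" and b: "\<bar>b\<bar> \<le> 1" and c: "\<bar>c\<bar> \<le> 1"
  shows "dist_sum (semi_implicit_step h \<beta> b c g z) (semi_implicit_step h \<beta> b c g z')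
      \<le> (1 + h * (1 + L)\<^sup>2) * dist_sum z z'"
proof -
  obtain x v x' v' where z: "z = (x, v)" "z' = (x', v')" by fastforce
  define y y' where "y = x + h *\<^sub>R v - (\<beta> * h\<^sup>2) *\<^sub>R g x" and "y' = x' + h *\<^sub>R v' - (\<beta> * h\<^sup>2) *\<^sub>R g x'"
  let ?A = "1 + h * L" and ?B = "1 + h * (1 + L)\<^sup>2"
  have \<beta>h: "\<beta> * h\<^sup>2 \<le> h"
    using \<beta> h mult_mono[of \<beta> 1 "h\<^sup>2" h] by (simp add: power2_eq_square)
  have "y - y' = ((x - x') + h *\<^sub>R (v - v')) - (\<beta> * h\<^sup>2) *\<^sub>R (g x - g x')"
    unfolding y_def y'_def by (simp add: algebra_simps)
  then have "norm (y - y') \<le> norm (x - x') + norm (h *\<^sub>R (v - v')) + norm ((\<beta> * h\<^sup>2) *\<^sub>R (g x - g x'))"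
    using norm_triangle_ineq4[of "(x - x') + h *\<^sub>R (v - v')"] norm_triangle_ineq[of "x - x'"]
    by (smt (verit))
  also have "\<dots> = norm (x - x') + h * norm (v - v') + \<beta> * h\<^sup>2 * norm (g x - g x')"
    using h \<beta> by simp
  also have "\<beta> * h\<^sup>2 * norm (g x - g x') \<le> h * (L * norm (x - x'))"
    using \<beta>h h g[of x x'] by (intro mult_mono) auto
  finally have dy: "norm (y - y') \<le> ?A * norm (x - x') + h * norm (v - v')"
    by (simp add: algebra_simps)
  have "(c *\<^sub>R v - (h * b) *\<^sub>R g y) - (c *\<^sub>R v' - (h * b) *\<^sub>R g y') = c *\<^sub>R (v - v') - (h * b) *\<^sub>R (g y - g y')"
    by (simp add: algebra_simps)
  then have "norm ((c *\<^sub>R v - (h * b) *\<^sub>R g y) - (c *\<^sub>R v' - (h * b) *\<^sub>R g y'))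
      \<le> \<bar>c\<bar> * norm (v - v') + h * (\<bar>b\<bar> * norm (g y - g y'))"
    using h norm_triangle_ineq4[of "c *\<^sub>R (v - v')" "(h * b) *\<^sub>R (g y - g y')"] by (simp add: abs_mult)
  also have "\<dots> \<le> 1 * norm (v - v') + h * (1 * (L * norm (y - y')))"
    using b c h g[of y y'] by (intro add_mono mult_mono mult_left_mono) auto
  finally have dv: "norm ((c *\<^sub>R v - (h * b) *\<^sub>R g y) - (c *\<^sub>R v' - (h * b) *\<^sub>R g y'))
      \<le> norm (v - v') + h * L * norm (y - y')" by simp
  have "dist_sum (semi_implicit_step h \<beta> b c g z) (semi_implicit_step h \<beta> b c g z')
      \<le> ?A * norm (y - y') + norm (v - v')"
    using dv unfolding dist_sum_def semi_implicit_step_def z y_def y'_def Let_def by (simp add: algebra_simps)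
  also have "\<dots> \<le> ?A * (?A * norm (x - x') + h * norm (v - v')) + norm (v - v')"
    using dy h L by (intro add_mono mult_left_mono) auto
  also have "\<dots> = ?A\<^sup>2 * norm (x - x') + (?A * h + 1) * norm (v - v')"
    by (simp add: algebra_simps power2_eq_square)
  also have "\<dots> \<le> ?B * norm (x - x') + ?B * norm (v - v')"
    using stability_factor_bounds[OF less_imp_le[OF h(1)] h(2) L]
      mult_right_mono[of "?A\<^sup>2" ?B "norm (x - x')"] mult_right_mono[of "?A * h + 1" ?B "norm (v - v')"]
    by simp
  finally show ?thesis unfolding dist_sum_def z by (simp add: algebra_simps)
qed

lemma semi_implicit_step_consistent:
  fixes g :: "'a::real_normed_vector \<Rightarrow> 'a"
  assumes g: "\<And>u w. norm (g u - g w) \<le> L * norm (u - w)" and L: "0 \<le> L"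
    and h: "0 < h" "h \<le> 1" and b: "\<bar>b\<bar> \<le> 1"
    and X: "norm (X' - X - h *\<^sub>R (W - (\<beta> * h) *\<^sub>R g X)) \<le> C\<^sub>X * h\<^sup>2"
    and W: "norm (W' - W - h *\<^sub>R (a *\<^sub>R g X' - p *\<^sub>R W)) \<le> C\<^sub>W * h\<^sup>2"
    and M: "norm W \<le> M" and M': "norm (g X') \<le> M'"
    and c: "\<bar>c - 1 + h * p\<bar> \<le> C\<^sub>c * h\<^sup>2" and ab: "\<bar>a + b\<bar> \<le> C\<^sub>a * h"
  shows "dist_sum (semi_implicit_step h \<beta> b c g (X, W)) (X', W')
    \<le> ((1 + L) * C\<^sub>X + C\<^sub>c * M + C\<^sub>a * M' + C\<^sub>W) * h\<^sup>2"
proof -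
  define x where "x = X + h *\<^sub>R W - (\<beta> * h\<^sup>2) *\<^sub>R g X"
  have "x - X' = - (X' - X - h *\<^sub>R (W - (\<beta> * h) *\<^sub>R g X))"
    unfolding x_def by (simp add: algebra_simps power2_eq_square)
  then have dx: "norm (x - X') \<le> C\<^sub>X * h\<^sup>2" using X by (simp only: norm_minus_cancel)
  have "(c *\<^sub>R W - (h * b) *\<^sub>R g x) - W' = (c - 1 + h * p) *\<^sub>R W - (h * b) *\<^sub>R (g x - g X')
      - (h * (a + b)) *\<^sub>R g X' - (W' - W - h *\<^sub>R (a *\<^sub>R g X' - p *\<^sub>R W))"
    by (simp add: algebra_simps)
  then have "norm ((c *\<^sub>R W - (h * b) *\<^sub>R g x) - W') \<le> norm ((c - 1 + h * p) *\<^sub>R W)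
      + norm ((h * b) *\<^sub>R (g x - g X')) + norm ((h * (a + b)) *\<^sub>R g X')
      + norm (W' - W - h *\<^sub>R (a *\<^sub>R g X' - p *\<^sub>R W))"
    by (simp only: norm_diff4_le)
  also have "\<dots> \<le> \<bar>c - 1 + h * p\<bar> * norm W
      + h * (\<bar>b\<bar> * norm (g x - g X')) + h * (\<bar>a + b\<bar> * norm (g X')) + C\<^sub>W * h\<^sup>2"
    using W h by (simp add: abs_mult)
  also have "\<dots> \<le> C\<^sub>c * h\<^sup>2 * M + h * (1 * (L * (C\<^sub>X * h\<^sup>2))) + h * (C\<^sub>a * h * M') + C\<^sub>W * h\<^sup>2"
  proof -
    have "\<bar>c - 1 + h * p\<bar> * norm W \<le> C\<^sub>c * h\<^sup>2 * M"
      by (rule mult_mono[OF c M]) (use order_trans[OF abs_ge_zero c] in auto)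
    moreover have "norm (g x - g X') \<le> L * (C\<^sub>X * h\<^sup>2)"
      using g[of x X'] mult_left_mono[OF dx L] by linarith
    then have "h * (\<bar>b\<bar> * norm (g x - g X')) \<le> h * (1 * (L * (C\<^sub>X * h\<^sup>2)))"
      using b h by (intro mult_left_mono mult_mono) auto
    moreover have "h * (\<bar>a + b\<bar> * norm (g X')) \<le> h * (C\<^sub>a * h * M')"
      using h order_trans[OF abs_ge_zero ab] by (intro mult_left_mono mult_mono[OF ab M']) auto
    ultimately show ?thesis by linarith
  qed
  also have "\<dots> \<le> (L * C\<^sub>X + C\<^sub>c * M + C\<^sub>a * M' + C\<^sub>W) * h\<^sup>2"
  proof -
    have "0 \<le> C\<^sub>X * h\<^sup>2" using dx norm_ge_zero[of "x - X'"] by linarith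
    then have "0 \<le> C\<^sub>X" using h by (simp add: zero_le_mult_iff)
    then have "h * (L * (C\<^sub>X * h\<^sup>2)) \<le> L * C\<^sub>X * h\<^sup>2"
      using h L by (simp add: mult_left_le_one_le mult.assoc)
    then show ?thesis by (simp add: algebra_simps power2_eq_square)
  qed
  finally show ?thesis
    using dx unfolding dist_sum_def semi_implicit_step_def x_def Let_def by (simp add: algebra_simps)
qed

section \<open>The \<beta>-HR ODE as a first-order system\<close>

lemma bounded_bilinear_matrix_vector_mult: "bounded_bilinear (\<lambda>(A::real^'n^'m) (v::real^'n). A *v v)"
proof -
  have "bilinear (\<lambda>(A::real^'n^'m) (v::real^'n). A *v v)"
    unfolding bilinear_def
  proof (intro conjI allI)
    fix A :: "real^'n^'m" show "linear (\<lambda>v. A *v v)" by (rule matrix_vector_mul_linear)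
  next
    fix v :: "real^'n" show "linear (\<lambda>A::real^'n^'m. A *v v)"
      by (rule linearI) (simp_all add: matrix_vector_mult_add_rdistrib scaleR_matrix_vector_assoc)
  qed
  then show ?thesis by (simp add: bilinear_conv_bounded_bilinear)
qed

lemma has_vector_derivative_chain_jacobian:
  fixes g :: "real^'n \<Rightarrow> real^'n" and H :: "real^'n \<Rightarrow> real^'n^'n"
  assumes "\<And>x. (g has_derivative (\<lambda>v. H x *v v)) (at x)"
    and "(Y has_vector_derivative Y') (at t within S)"
  shows "((\<lambda>t. g (Y t)) has_vector_derivative H (Y t) *v Y') (at t within S)"
  using has_derivative_compose[OF assms(2)[unfolded has_vector_derivative_def] assms(1)]
  by (simp add: has_vector_derivative_def matrix_vector_mult_scaleR)

text \<open>The \<beta>-HR ODE for \<open>X\<close> is \<open>(X, W)' = HR_field \<mu> \<beta> g h (X, W)\<close> with \<open>h = sqrt s\<close> and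
  \<open>W = X' + \<beta> h g X\<close>.\<close>
definition HR_field :: "real \<Rightarrow> real \<Rightarrow> ('a::real_normed_vector \<Rightarrow> 'a) \<Rightarrow> real \<Rightarrow> 'a \<times> 'a \<Rightarrow> 'a \<times> 'a" where
  "HR_field \<mu> \<beta> g h z =
     (snd z - (\<beta> * h) *\<^sub>R g (fst z),
      (2 * sqrt \<mu> * \<beta> * h - 1 - sqrt \<mu> * h) *\<^sub>R g (fst z) - (2 * sqrt \<mu>) *\<^sub>R snd z)"

definition HR_init :: "real \<Rightarrow> real \<Rightarrow> ('a::real_normed_vector \<Rightarrow> 'a) \<Rightarrow> 'a \<Rightarrow> real \<Rightarrow> 'a \<times> 'a" where
  "HR_init \<mu> \<beta> g x0 h = (x0, (\<beta> * h - 2 * h / (1 + sqrt \<mu> * h)) *\<^sub>R g x0)"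

lemma HR_coefficient_bound:
  assumes "0 \<le> \<mu>" "0 \<le> \<beta>" "\<beta> \<le> 1" "0 \<le> h" "h \<le> r"
  shows "\<bar>2 * sqrt \<mu> * \<beta> * h - 1 - sqrt \<mu> * h\<bar> \<le> 1 + 3 * sqrt \<mu> * r"
proof -
  have "0 \<le> sqrt \<mu> * (\<beta> * h)" "sqrt \<mu> * (\<beta> * h) \<le> sqrt \<mu> * r" "0 \<le> sqrt \<mu> * h" "sqrt \<mu> * h \<le> sqrt \<mu> * r"
    using assms mult_mono[of \<beta> 1 h r] by (auto intro!: mult_left_mono)
  then show ?thesis by (simp add: abs_le_iff algebra_simps)
qed

lemma HR_field_lipschitz:
  fixes g :: "'a::banach \<Rightarrow> 'a"
  assumes \<mu>: "0 < \<mu>" and \<beta>: "0 \<le> \<beta>" "\<beta> \<le> 1" and h: "0 \<le> h" "h \<le> r" and L: "0 \<le> L"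
    and g: "\<And>x y. norm (g x - g y) \<le> L * norm (x - y)"
  shows "lipschitz_field (HR_field \<mu> \<beta> g h) (1 + 2 * sqrt \<mu> + (1 + r + 3 * sqrt \<mu> * r) * L)"
proof
  show "0 < 1 + 2 * sqrt \<mu> + (1 + r + 3 * sqrt \<mu> * r) * L"
    using \<mu> h L by (intro add_pos_nonneg) auto
  fix z z' :: "'a \<times> 'a"
  let ?a = "2 * sqrt \<mu> * \<beta> * h - 1 - sqrt \<mu> * h" and ?n = "norm (z - z')"
  let ?dX = "fst z - fst z'" and ?dW = "snd z - snd z'" and ?dg = "g (fst z) - g (fst z')"
  have "norm ?dX \<le> ?n"
    using norm_fst_le[of "fst (z - z')" "snd (z - z')", unfolded prod.collapse] by (simp only: fst_diff)
  have "norm ?dW \<le> ?n"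
    using norm_snd_le[of "snd (z - z')" "fst (z - z')", unfolded prod.collapse] by (simp only: snd_diff)
  have dg: "norm ?dg \<le> L * ?n"
    using g[of "fst z" "fst z'"] mult_left_mono[OF \<open>norm ?dX \<le> ?n\<close> L] by linarith
  have a: "\<bar>?a\<bar> \<le> 1 + 3 * sqrt \<mu> * r" using HR_coefficient_bound \<mu> \<beta> h by simp
  have "HR_field \<mu> \<beta> g h z - HR_field \<mu> \<beta> g h z' = (?dW - (\<beta> * h) *\<^sub>R ?dg, ?a *\<^sub>R ?dg - (2 * sqrt \<mu>) *\<^sub>R ?dW)"
    unfolding HR_field_def by (simp add: algebra_simps)
  then have "norm (HR_field \<mu> \<beta> g h z - HR_field \<mu> \<beta> g h z')
      \<le> norm ?dW + \<beta> * h * norm ?dg + (\<bar>?a\<bar> * norm ?dg + 2 * sqrt \<mu> * norm ?dW)"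
    using norm_Pair_le[of "?dW - (\<beta> * h) *\<^sub>R ?dg" "?a *\<^sub>R ?dg - (2 * sqrt \<mu>) *\<^sub>R ?dW"]
      norm_triangle_ineq4[of ?dW "(\<beta> * h) *\<^sub>R ?dg"] norm_triangle_ineq4[of "?a *\<^sub>R ?dg" "(2 * sqrt \<mu>) *\<^sub>R ?dW"]
      \<beta> h \<mu> by simp
  also have "\<dots> \<le> ?n + r * (L * ?n) + ((1 + 3 * sqrt \<mu> * r) * (L * ?n) + 2 * sqrt \<mu> * ?n)"
    using \<open>norm ?dW \<le> ?n\<close> dg a \<beta> h \<mu> mult_mono[of \<beta> 1 h r]
    by (intro add_mono mult_mono mult_left_mono) auto
  also have "\<dots> = (1 + 2 * sqrt \<mu> + (1 + r + 3 * sqrt \<mu> * r) * L) * ?n"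
    by (simp add: algebra_simps)
  finally show "norm (HR_field \<mu> \<beta> g h z - HR_field \<mu> \<beta> g h z')
      \<le> (1 + 2 * sqrt \<mu> + (1 + r + 3 * sqrt \<mu> * r) * L) * ?n" .
qed

lemma HR_solution_imp_integral_solution:
  fixes g :: "real^'n \<Rightarrow> real^'n" and H :: "real^'n \<Rightarrow> real^'n^'n"
  assumes g': "\<And>x. (g has_derivative (\<lambda>v. H x *v v)) (at x)" and Y: "HR_solution \<mu> \<beta> s g H x0 Y"
  shows "\<exists>w. integral_solution (HR_field \<mu> \<beta> g (sqrt s)) (HR_init \<mu> \<beta> g x0 (sqrt s)) (\<lambda>t. (Y t, w t))"
proof -
  obtain Y' Y'' where Y': "\<And>t. 0 \<le> t \<Longrightarrow> (Y has_vector_derivative Y' t) (at t within {0..})"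
    and Y'': "\<And>t. 0 \<le> t \<Longrightarrow> (Y' has_vector_derivative Y'' t) (at t within {0..})"
    and ode: "\<And>t. 0 \<le> t \<Longrightarrow> Y'' t + (2 * sqrt \<mu>) *\<^sub>R Y' t + (\<beta> * sqrt s) *\<^sub>R (H (Y t) *v Y' t)
                 + (1 + sqrt (\<mu> * s)) *\<^sub>R g (Y t) = 0"
    and init: "Y 0 = x0" "Y' 0 = - ((2 * sqrt s) / (1 + sqrt (\<mu> * s))) *\<^sub>R g x0"
    using Y unfolding HR_solution_def by blast
  define w where "w t = Y' t + (\<beta> * sqrt s) *\<^sub>R g (Y t)" for t
  have "((\<lambda>t. (Y t, w t)) has_vector_derivative HR_field \<mu> \<beta> g (sqrt s) (Y t, w t)) (at t within {0..})"
    if t: "0 \<le> t" for t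
  proof -
    have "((\<lambda>t. (Y t, w t)) has_vector_derivative
        (Y' t, Y'' t + (\<beta> * sqrt s) *\<^sub>R (H (Y t) *v Y' t))) (at t within {0..})"
      unfolding w_def
      by (intro has_vector_derivative_Pair Y'[OF t] has_vector_derivative_add Y''[OF t]
          bounded_linear.has_vector_derivative[OF bounded_linear_scaleR_right]
          has_vector_derivative_chain_jacobian[OF g'])
    moreover have "Y'' t + (\<beta> * sqrt s) *\<^sub>R (H (Y t) *v Y' t) = snd (HR_field \<mu> \<beta> g (sqrt s) (Y t, w t))"
    proof -
      have "Y'' t + (\<beta> * sqrt s) *\<^sub>R (H (Y t) *v Y' t) - snd (HR_field \<mu> \<beta> g (sqrt s) (Y t, w t))
          = Y'' t + (2 * sqrt \<mu>) *\<^sub>R Y' t + (\<beta> * sqrt s) *\<^sub>R (H (Y t) *v Y' t)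
            + (1 + sqrt (\<mu> * s)) *\<^sub>R g (Y t)"
        unfolding HR_field_def w_def real_sqrt_mult by (simp add: algebra_simps)
      then show ?thesis using ode[OF t] by simp
    qed
    ultimately show ?thesis by (simp add: HR_field_def w_def)
  qed
  then have "integral_solution (HR_field \<mu> \<beta> g (sqrt s)) (Y 0, w 0) (\<lambda>t. (Y t, w t))"
    by (rule has_vector_derivative_imp_integral_solution)
  moreover have "(Y 0, w 0) = HR_init \<mu> \<beta> g x0 (sqrt s)"
    unfolding HR_init_def w_def init real_sqrt_mult by (simp add: algebra_simps)
  ultimately show ?thesis by auto
qed

lemma integral_solution_imp_HR_solution:
  fixes g :: "real^'n \<Rightarrow> real^'n" and H :: "real^'n \<Rightarrow> real^'n^'n"
  assumes g': "\<And>x. (g has_derivative (\<lambda>v. H x *v v)) (at x)" and H: "continuous_on UNIV H"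
    and F: "lipschitz_field (HR_field \<mu> \<beta> g (sqrt s)) K"
    and z: "integral_solution (HR_field \<mu> \<beta> g (sqrt s)) (HR_init \<mu> \<beta> g x0 (sqrt s)) z"
  shows "HR_solution \<mu> \<beta> s g H x0 (\<lambda>t. fst (z t))"
proof -
  let ?F = "HR_field \<mu> \<beta> g (sqrt s)"
  interpret lipschitz_field ?F K by (rule F)
  define X where "X t = fst (z t)" for t
  define X' where "X' t = snd (z t) - (\<beta> * sqrt s) *\<^sub>R g (X t)" for t
  define X'' where "X'' t = snd (?F (z t)) - (\<beta> * sqrt s) *\<^sub>R (H (X t) *v X' t)" for t
  have dz: "(z has_vector_derivative ?F (z t)) (at t within {0..})" if "0 \<le> t" for t
    by (rule integral_solution_has_vector_derivative[OF z that])
  have dX: "(X has_vector_derivative X' t) (at t within {0..})" if t: "0 \<le> t" for t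
    using bounded_linear.has_vector_derivative[OF bounded_linear_fst dz[OF t]]
    unfolding X_def X'_def by (simp add: HR_field_def)
  have dX': "(X' has_vector_derivative X'' t) (at t within {0..})" if t: "0 \<le> t" for t
  proof -
    have "((\<lambda>t. snd (z t) - (\<beta> * sqrt s) *\<^sub>R g (X t)) has_vector_derivative X'' t) (at t within {0..})"
      unfolding X''_def
      by (intro has_vector_derivative_diff bounded_linear.has_vector_derivative[OF bounded_linear_snd dz[OF t]]
          bounded_linear.has_vector_derivative[OF bounded_linear_scaleR_right]
          has_vector_derivative_chain_jacobian[OF g' dX[OF t]])
    then show ?thesis by (simp add: X'_def[abs_def])
  qed
  have cz: "continuous_on {0..} z" using z by (simp add: integral_solution_def)
  have cg: "continuous_on UNIV g"
    by (rule continuous_at_imp_continuous_on) (use g' has_derivative_continuous in blast)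
  have cX: "continuous_on {0..} X" unfolding X_def by (intro continuous_intros cz)
  have cX': "continuous_on {0..} X'"
    unfolding X'_def by (intro continuous_intros cz continuous_on_compose2[OF cg cX]) auto
  have "continuous_on {0..} X''"
    unfolding X''_def
    by (intro continuous_intros bounded_bilinear.continuous_on[OF bounded_bilinear_matrix_vector_mult]
        continuous_on_compose2[OF continuous_on_F cz] continuous_on_compose2[OF H cX] cX') auto
  moreover have "X'' t + (2 * sqrt \<mu>) *\<^sub>R X' t + (\<beta> * sqrt s) *\<^sub>R (H (X t) *v X' t)
      + (1 + sqrt (\<mu> * s)) *\<^sub>R g (X t) = 0" for t
    unfolding X''_def X'_def HR_field_def X_def real_sqrt_mult by (simp add: algebra_simps)
  moreover have "z 0 = HR_init \<mu> \<beta> g x0 (sqrt s)" using z by (simp add: integral_solution_def)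
  then have "X 0 = x0" "X' 0 = - ((2 * sqrt s) / (1 + sqrt (\<mu> * s))) *\<^sub>R g x0"
    unfolding X'_def X_def HR_init_def real_sqrt_mult by (simp_all add: algebra_simps)
  ultimately show ?thesis unfolding HR_solution_def X_def[symmetric] using dX dX' by blast
qed

lemma HR_solution_exists_unique:
  fixes g :: "real^'n \<Rightarrow> real^'n" and H :: "real^'n \<Rightarrow> real^'n^'n"
  assumes \<mu>: "0 < \<mu>" and \<beta>: "0 \<le> \<beta>" "\<beta> \<le> 1" and s: "0 < s" and L: "0 \<le> L"
    and g: "\<And>x y. norm (g x - g y) \<le> L * norm (x - y)"
    and g': "\<And>x. (g has_derivative (\<lambda>v. H x *v v)) (at x)" and H: "continuous_on UNIV H"
  shows "\<exists>X. HR_solution \<mu> \<beta> s g H x0 X \<and> (\<forall>Y. HR_solution \<mu> \<beta> s g H x0 Y \<longrightarrow> (\<forall>t\<ge>0. Y t = X t))"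
proof -
  let ?F = "HR_field \<mu> \<beta> g (sqrt s)" and ?z0 = "HR_init \<mu> \<beta> g x0 (sqrt s)"
  have F: "lipschitz_field ?F (1 + 2 * sqrt \<mu> + (1 + sqrt s + 3 * sqrt \<mu> * sqrt s) * L)"
    by (rule HR_field_lipschitz[OF \<mu> \<beta> _ order.refl L g]) (use s in simp)
  interpret lipschitz_field ?F "1 + 2 * sqrt \<mu> + (1 + sqrt s + 3 * sqrt \<mu> * sqrt s) * L" by (rule F)
  obtain z where z: "integral_solution ?F ?z0 z" using integral_solution_exists by blast
  have "Y t = fst (z t)" if Y: "HR_solution \<mu> \<beta> s g H x0 Y" and t: "0 \<le> t" for Y t
  proof -
    obtain w where "integral_solution ?F ?z0 (\<lambda>t. (Y t, w t))"
      using HR_solution_imp_integral_solution[OF g' Y] by blast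
    from integral_solution_unique[OF this z t] show ?thesis by (metis fst_conv)
  qed
  then show ?thesis using integral_solution_imp_HR_solution[OF g' H F z] by blast
qed

section \<open>Convergence of the scheme\<close>

lemma Limsup_ereal_eq_0_squeeze:
  fixes \<phi> \<psi> :: "'a \<Rightarrow> real"
  assumes "F \<noteq> bot" and "(\<psi> \<longlongrightarrow> 0) F" and "eventually (\<lambda>x. 0 \<le> \<phi> x \<and> \<phi> x \<le> \<psi> x) F"
  shows "Limsup F (\<lambda>x. ereal (\<phi> x)) = 0"
proof -
  have "(\<phi> \<longlongrightarrow> 0) F"
    by (rule tendsto_sandwich[OF _ _ tendsto_const assms(2)]) (use assms(3) in \<open>auto elim: eventually_mono\<close>)
  then have "((\<lambda>x. ereal (\<phi> x)) \<longlongrightarrow> ereal 0) F" by (rule tendsto_ereal)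
  from lim_imp_Limsup[OF assms(1) this] show ?thesis by (simp add: zero_ereal_def)
qed

lemma Limsup_max_sampling_error_eq_0:
  fixes x :: "real \<Rightarrow> nat \<Rightarrow> 'a::real_normed_vector" and X :: "real \<Rightarrow> real \<Rightarrow> 'a"
  assumes T: "0 < T"
    and error: "\<And>s k. 0 < s \<Longrightarrow> s \<le> 1 \<Longrightarrow> real k * sqrt s \<le> T \<Longrightarrow>
      norm (x s k - X s (real k * sqrt s)) \<le> C * sqrt s"
  shows "Limsup (at_right 0)
    (\<lambda>s. ereal (Max ((\<lambda>k. norm (x s k - X s (real k * sqrt s))) ` {k::nat. real k \<le> T / sqrt s}))) = 0"
proof (rule Limsup_ereal_eq_0_squeeze[where \<psi> = "\<lambda>s. C * sqrt s"])
  have "((\<lambda>s. C * sqrt s) \<longlongrightarrow> C * sqrt 0) (at_right 0)" by (intro tendsto_intros)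
  then show "((\<lambda>s. C * sqrt s) \<longlongrightarrow> 0) (at_right 0)" by simp
  let ?e = "\<lambda>s k. norm (x s k - X s (real k * sqrt s))" and ?K = "\<lambda>s. {k::nat. real k \<le> T / sqrt s}"
  have "0 \<le> Max (?e s ` ?K s) \<and> Max (?e s ` ?K s) \<le> C * sqrt s" if s: "0 < s" "s < 1" for s
  proof -
    have "finite (?K s)"
      by (rule finite_subset[of _ "{..nat \<lfloor>T / sqrt s\<rfloor>}"]) (auto intro: le_nat_floor)
    then have fin: "finite (?e s ` ?K s)" by simp
    have "0 \<in> ?K s" using T s by simp
    then have "?e s 0 \<le> Max (?e s ` ?K s)" by (intro Max_ge[OF fin]) blast
    moreover have "?e s k \<le> C * sqrt s" if "k \<in> ?K s" for k
      using error[of s k] that s by (simp add: le_divide_eq)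
    then have "Max (?e s ` ?K s) \<le> C * sqrt s"
      using fin \<open>0 \<in> ?K s\<close> by (subst Max_le_iff) blast+
    moreover have "0 \<le> ?e s 0" by simp
    ultimately show ?thesis by linarith
  qed
  then show "eventually (\<lambda>s. 0 \<le> Max (?e s ` ?K s) \<and> Max (?e s ` ?K s) \<le> C * sqrt s) (at_right 0)"
    unfolding eventually_at_right_field by (intro exI[of _ 1]) auto
qed simp

definition HR_step :: "real \<Rightarrow> real \<Rightarrow> ('a::real_normed_vector \<Rightarrow> 'a) \<Rightarrow> real \<Rightarrow> 'a \<times> 'a \<Rightarrow> 'a \<times> 'a" where
  "HR_step \<mu> \<beta> g h =
     (let c = (1 - sqrt \<mu> * h) / (1 + sqrt \<mu> * h) in semi_implicit_step h \<beta> (1 - \<beta> + \<beta> * c) c g)"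

lemma HR_pair_eq: "HR_pair \<mu> \<beta> s g x0 k = (HR_seq \<mu> \<beta> s g x0 k, HR_seq \<mu> \<beta> s g x0 (Suc k))"
  by (simp add: HR_seq_def case_prod_beta Let_def)

lemma HR_seq_0: "HR_seq \<mu> \<beta> s g x0 0 = x0"
  by (simp add: HR_seq_def)

lemma HR_seq_1: "HR_seq \<mu> \<beta> s g x0 (Suc 0) = x0 - ((2 * s) / (1 + sqrt (\<mu> * s))) *\<^sub>R g x0"
  by (simp add: HR_seq_def case_prod_beta Let_def)

lemma HR_seq_Suc_Suc:
  "HR_seq \<mu> \<beta> s g x0 (Suc (Suc k)) =
     (let x = HR_seq \<mu> \<beta> s g x0; c = (1 - sqrt (\<mu> * s)) / (1 + sqrt (\<mu> * s))
      in x (Suc k) + c *\<^sub>R (x (Suc k) - x k) - s *\<^sub>R g (x (Suc k)) - (\<beta> * c * s) *\<^sub>R (g (x (Suc k)) - g (x k)))"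
proof -
  have "HR_seq \<mu> \<beta> s g x0 (Suc (Suc k)) = snd (HR_pair \<mu> \<beta> s g x0 (Suc k))"
    using HR_pair_eq[of \<mu> \<beta> s g x0 "Suc k"] by simp
  then show ?thesis
    by (simp only: HR_pair.simps HR_pair_eq[of \<mu> \<beta> s g x0 k] Let_def case_prod_conv snd_conv)
qed

lemma HR_seq_eq_HR_step_iterate:
  fixes \<mu> \<beta> s :: real and x0 :: "real^'n" and g :: "real^'n \<Rightarrow> real^'n"
  assumes s: "0 < s"
  defines "x \<equiv> HR_seq \<mu> \<beta> s g x0"
  defines "v \<equiv> \<lambda>k. (1 / sqrt s) *\<^sub>R (x (Suc k) - x k) + (\<beta> * sqrt s) *\<^sub>R g (x k)"
  shows "(x 0, v 0) = HR_init \<mu> \<beta> g x0 (sqrt s)"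
    and "(x (Suc k), v (Suc k)) = HR_step \<mu> \<beta> g (sqrt s) (x k, v k)"
proof -
  define h where "h = sqrt s"
  have h: "0 < h" and s_eq: "s = h\<^sup>2" and sqrt_s: "sqrt s = h" unfolding h_def using s by simp_all
  show "(x 0, v 0) = HR_init \<mu> \<beta> g x0 (sqrt s)"
    unfolding v_def x_def HR_seq_0 HR_seq_1 HR_init_def real_sqrt_mult sqrt_s
    using h by (simp add: s_eq vec_eq_iff field_simps power2_eq_square)
  define c where "c = (1 - sqrt \<mu> * h) / (1 + sqrt \<mu> * h)"
  have x: "x (Suc k) = x k + h *\<^sub>R v k - (\<beta> * h\<^sup>2) *\<^sub>R g (x k)" for k
    unfolding v_def sqrt_s using h by (simp add: vec_eq_iff field_simps power2_eq_square)
  have x2: "x (Suc (Suc k)) = x (Suc k) + c *\<^sub>R (x (Suc k) - x k) - h\<^sup>2 *\<^sub>R g (x (Suc k))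
      - (\<beta> * c * h\<^sup>2) *\<^sub>R (g (x (Suc k)) - g (x k))"
    unfolding x_def HR_seq_Suc_Suc Let_def c_def real_sqrt_mult sqrt_s s_eq using h by simp
  have "v (Suc k) = c *\<^sub>R v k - (h * (1 - \<beta> + \<beta> * c)) *\<^sub>R g (x (Suc k))"
    unfolding v_def sqrt_s x2 using h by (simp add: vec_eq_iff field_simps power2_eq_square)
  then show "(x (Suc k), v (Suc k)) = HR_step \<mu> \<beta> g (sqrt s) (x k, v k)"
    unfolding HR_step_def semi_implicit_step_def Let_def sqrt_s c_def[symmetric] by (simp add: x)
qed

lemma HR_step_coefficients:
  fixes q \<beta> :: real
  assumes q: "0 < q" and \<beta>: "0 \<le> \<beta>" "\<beta> \<le> 1"
  defines "c \<equiv> (1 - q) / (1 + q)"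
  shows "\<bar>c\<bar> \<le> 1" and "\<bar>1 - \<beta> + \<beta> * c\<bar> \<le> 1" and "\<bar>c - 1 + 2 * q\<bar> \<le> 2 * q\<^sup>2"
    and "\<bar>(2 * \<beta> * q - 1 - q) + (1 - \<beta> + \<beta> * c)\<bar> \<le> 5 * q"
proof -
  have one_minus_c: "1 - c = 2 * q / (1 + q)" unfolding c_def using q by (simp add: field_simps)
  have "2 * q / (1 + q) \<le> 2 * q" using q by (simp add: field_simps)
  then have c: "0 \<le> 1 - c" "1 - c \<le> 2 * q" unfolding one_minus_c using q by auto
  show c1: "\<bar>c\<bar> \<le> 1" unfolding c_def using q by (simp add: abs_le_iff divide_le_eq le_divide_eq)
  have "\<bar>\<beta> * c\<bar> \<le> \<beta>" using mult_left_mono[OF c1 \<beta>(1)] \<beta> by (simp add: abs_mult)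
  then show "\<bar>1 - \<beta> + \<beta> * c\<bar> \<le> 1" using \<beta> by (simp add: abs_le_iff)
  have "c - 1 + 2 * q = 2 * q\<^sup>2 / (1 + q)" unfolding c_def using q by (simp add: field_simps power2_eq_square)
  moreover have "2 * q\<^sup>2 / (1 + q) \<le> 2 * q\<^sup>2" using q by (simp add: field_simps)
  ultimately show "\<bar>c - 1 + 2 * q\<bar> \<le> 2 * q\<^sup>2" using q by simp
  have "0 \<le> \<beta> * (1 - c)" "\<beta> * (1 - c) \<le> 2 * q" "0 \<le> \<beta> * q" "\<beta> * q \<le> q"
    using c \<beta> q by (auto intro: mult_left_le_one_le order_trans[OF mult_left_le_one_le])
  moreover have "(2 * \<beta> * q - 1 - q) + (1 - \<beta> + \<beta> * c) = 2 * (\<beta> * q) - q - \<beta> * (1 - c)"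
    by (simp add: algebra_simps)
  ultimately show "\<bar>(2 * \<beta> * q - 1 - q) + (1 - \<beta> + \<beta> * c)\<bar> \<le> 5 * q"
    unfolding abs_le_iff using q by linarith
qed

lemma HR_field_zero_bound:
  assumes "0 \<le> \<mu>" "0 \<le> \<beta>" "\<beta> \<le> 1" "0 \<le> h" "h \<le> 1"
  shows "norm (HR_field \<mu> \<beta> g h 0) \<le> (2 + 3 * sqrt \<mu>) * norm (g 0)"
proof -
  let ?a = "2 * sqrt \<mu> * \<beta> * h - 1 - sqrt \<mu> * h"
  have "norm (HR_field \<mu> \<beta> g h 0) \<le> norm ((\<beta> * h) *\<^sub>R g 0) + norm (?a *\<^sub>R g 0)"
    using norm_Pair_le[of "- ((\<beta> * h) *\<^sub>R g 0)" "?a *\<^sub>R g 0"] by (simp add: HR_field_def)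
  also have "\<dots> = (\<beta> * h) * norm (g 0) + \<bar>?a\<bar> * norm (g 0)"
    using assms by simp
  also have "\<dots> \<le> 1 * norm (g 0) + (1 + 3 * sqrt \<mu>) * norm (g 0)"
    using assms HR_coefficient_bound[of \<mu> \<beta> h 1] mult_mono[of \<beta> 1 h 1]
    by (intro add_mono mult_right_mono norm_ge_zero) auto
  finally show ?thesis by (simp add: algebra_simps)
qed

lemma HR_init_bound:
  assumes "0 \<le> \<mu>" "0 \<le> \<beta>" "\<beta> \<le> 1" "0 \<le> h" "h \<le> 1"
  shows "norm (HR_init \<mu> \<beta> g x0 h) \<le> norm x0 + 2 * norm (g x0)"
proof -
  have "2 * h / (1 + sqrt \<mu> * h) \<le> 2 * h / 1"
    by (rule divide_left_mono) (use assms in \<open>auto intro: add_pos_nonneg\<close>)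
  moreover have "0 \<le> 2 * h / (1 + sqrt \<mu> * h)" using assms by simp
  ultimately have "0 \<le> 2 * h / (1 + sqrt \<mu> * h)" "2 * h / (1 + sqrt \<mu> * h) \<le> 2 * h" by simp_all
  moreover have "0 \<le> \<beta> * h" "\<beta> * h \<le> 1" using assms mult_mono[of \<beta> 1 h 1] by auto
  ultimately have "\<bar>\<beta> * h - 2 * h / (1 + sqrt \<mu> * h)\<bar> \<le> 2"
    unfolding abs_le_iff using assms by linarith
  then have "norm ((\<beta> * h - 2 * h / (1 + sqrt \<mu> * h)) *\<^sub>R g x0) \<le> 2 * norm (g x0)"
    by (simp add: mult_right_mono)
  then show ?thesis
    using norm_Pair_le[of x0 "(\<beta> * h - 2 * h / (1 + sqrt \<mu> * h)) *\<^sub>R g x0"] by (simp add: HR_init_def)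
qed

lemma HR_step_stable:
  fixes g :: "'a::real_normed_vector \<Rightarrow> 'a"
  assumes \<mu>: "0 < \<mu>" and \<beta>: "0 \<le> \<beta>" "\<beta> \<le> 1" and h: "0 < h" "h \<le> 1"
    and g: "\<And>u w. norm (g u - g w) \<le> L * norm (u - w)" and L: "0 \<le> L"
  shows "dist_sum (HR_step \<mu> \<beta> g h z) (HR_step \<mu> \<beta> g h z') \<le> (1 + h * (1 + L)\<^sup>2) * dist_sum z z'"
proof -
  have q: "0 < sqrt \<mu> * h" using \<mu> h by simp
  show ?thesis
    unfolding HR_step_def Let_def
    by (rule semi_implicit_step_stable[OF g L h \<beta> HR_step_coefficients(2,1)[OF q \<beta>]])
qed

lemma HR_integral_solution_increments:
  fixes g :: "'a::banach \<Rightarrow> 'a"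
  assumes F: "lipschitz_field (HR_field \<mu> \<beta> g h) K" and z: "integral_solution (HR_field \<mu> \<beta> g h) z0 z"
    and t: "0 \<le> t" and h: "0 \<le> h" and M: "\<And>\<tau>. \<tau> \<in> {t..t+h} \<Longrightarrow> norm (HR_field \<mu> \<beta> g h (z \<tau>)) \<le> M"
    and g: "\<And>x y. norm (g x - g y) \<le> L * norm (x - y)" and L: "0 \<le> L"
    and a: "\<bar>2 * sqrt \<mu> * \<beta> * h - 1 - sqrt \<mu> * h\<bar> \<le> A"
  shows "norm (fst (z (t+h)) - fst (z t) - h *\<^sub>R (snd (z t) - (\<beta> * h) *\<^sub>R g (fst (z t)))) \<le> K * M * h\<^sup>2"
    and "norm (snd (z (t+h)) - snd (z t)
          - h *\<^sub>R ((2 * sqrt \<mu> * \<beta> * h - 1 - sqrt \<mu> * h) *\<^sub>R g (fst (z (t+h))) - (2 * sqrt \<mu>) *\<^sub>R snd (z t)))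
        \<le> (K + A * L) * M * h\<^sup>2"
proof -
  interpret lipschitz_field "HR_field \<mu> \<beta> g h" K by (rule F)
  let ?a = "2 * sqrt \<mu> * \<beta> * h - 1 - sqrt \<mu> * h"
  let ?e = "z (t+h) - z t - h *\<^sub>R HR_field \<mu> \<beta> g h (z t)"
  have e: "norm ?e \<le> K * M * h\<^sup>2" by (rule integral_solution_euler_step[OF z t h M])
  have fst_e: "norm (fst ?e) \<le> norm ?e" by (rule norm_fst_le[of "fst ?e" "snd ?e", unfolded prod.collapse])
  have snd_e: "norm (snd ?e) \<le> norm ?e" by (rule norm_snd_le[of "snd ?e" "fst ?e", unfolded prod.collapse])
  have fst_eq: "fst ?e = fst (z (t+h)) - fst (z t) - h *\<^sub>R (snd (z t) - (\<beta> * h) *\<^sub>R g (fst (z t)))"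
    by (simp add: HR_field_def)
  show "norm (fst (z (t+h)) - fst (z t) - h *\<^sub>R (snd (z t) - (\<beta> * h) *\<^sub>R g (fst (z t)))) \<le> K * M * h\<^sup>2"
    using fst_e e unfolding fst_eq by linarith
  have "norm (fst (z (t+h)) - fst (z t)) \<le> norm (z (t+h) - z t)"
    using norm_fst_le[of "fst (z (t+h) - z t)" "snd (z (t+h) - z t)", unfolded prod.collapse]
    by (simp only: fst_diff)
  also have "\<dots> \<le> M * (t + h - t)"
    by (rule integral_solution_increment_bound[OF z t]) (use h M in auto)
  finally have "norm (g (fst (z (t+h))) - g (fst (z t))) \<le> L * (M * h)"
    using g[of "fst (z (t+h))" "fst (z t)"] mult_left_mono[OF _ L] by fastforce
  then have "h * (\<bar>?a\<bar> * norm (g (fst (z (t+h))) - g (fst (z t)))) \<le> h * (A * (L * (M * h)))"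
    using h a order_trans[OF abs_ge_zero a] by (intro mult_left_mono mult_mono) auto
  then have dg: "norm ((h * ?a) *\<^sub>R (g (fst (z (t+h))) - g (fst (z t)))) \<le> h * (A * (L * (M * h)))"
    using h by (simp add: abs_mult mult.assoc)
  have "snd (z (t+h)) - snd (z t) - h *\<^sub>R (?a *\<^sub>R g (fst (z (t+h))) - (2 * sqrt \<mu>) *\<^sub>R snd (z t))
      = snd ?e - (h * ?a) *\<^sub>R (g (fst (z (t+h))) - g (fst (z t)))"
    by (simp add: HR_field_def algebra_simps)
  also have "norm \<dots> \<le> K * M * h\<^sup>2 + h * (A * (L * (M * h)))"
    using norm_triangle_ineq4[of "snd ?e" "(h * ?a) *\<^sub>R (g (fst (z (t+h))) - g (fst (z t)))"] snd_e e dg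
    by linarith
  also have "\<dots> = (K + A * L) * M * h\<^sup>2"
    by (simp add: algebra_simps power2_eq_square)
  finally show "norm (snd (z (t+h)) - snd (z t) - h *\<^sub>R (?a *\<^sub>R g (fst (z (t+h))) - (2 * sqrt \<mu>) *\<^sub>R snd (z t)))
      \<le> (K + A * L) * M * h\<^sup>2" .
qed

lemma HR_local_truncation_error:
  fixes g :: "'a::banach \<Rightarrow> 'a"
  assumes \<mu>: "0 < \<mu>" and \<beta>: "0 \<le> \<beta>" "\<beta> \<le> 1" and L: "0 \<le> L"
    and g: "\<And>x y. norm (g x - g y) \<le> L * norm (x - y)" and M: "0 \<le> M"
  shows "\<exists>C\<ge>0. \<forall>h z0 z t. 0 < h \<longrightarrow> h \<le> 1 \<longrightarrow> integral_solution (HR_field \<mu> \<beta> g h) z0 z \<longrightarrow>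
           (\<forall>\<tau>\<in>{0..T}. norm (z \<tau>) \<le> M) \<longrightarrow> 0 \<le> t \<longrightarrow> t + h \<le> T \<longrightarrow>
           dist_sum (HR_step \<mu> \<beta> g h (z t)) (z (t + h)) \<le> C * h\<^sup>2"
proof -
  define K where "K = 1 + 2 * sqrt \<mu> + (2 + 3 * sqrt \<mu>) * L"
  define A where "A = 1 + 3 * sqrt \<mu>"
  define M\<^sub>F where "M\<^sub>F = (2 + 3 * sqrt \<mu>) * norm (g 0) + K * M"
  define M\<^sub>g where "M\<^sub>g = norm (g 0) + L * M"
  define C where "C = (1 + L) * (K * M\<^sub>F) + (2 * \<mu>) * M + (5 * sqrt \<mu>) * M\<^sub>g + (K + A * L) * M\<^sub>F"
  have K: "0 \<le> K" and A: "0 \<le> A" unfolding K_def A_def using L \<mu> by simp_all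
  have M\<^sub>F: "0 \<le> M\<^sub>F" unfolding M\<^sub>F_def using K M \<mu> by simp
  have "0 \<le> C" unfolding C_def M\<^sub>g_def using K A L M M\<^sub>F \<mu> by simp
  moreover have "dist_sum (HR_step \<mu> \<beta> g h (z t)) (z (t + h)) \<le> C * h\<^sup>2"
    if h: "0 < h" "h \<le> 1" and z: "integral_solution (HR_field \<mu> \<beta> g h) z0 z"
      and bound: "\<forall>\<tau>\<in>{0..T}. norm (z \<tau>) \<le> M" and t: "0 \<le> t" "t + h \<le> T" for h z0 z t
  proof -
    let ?a = "2 * sqrt \<mu> * \<beta> * h - 1 - sqrt \<mu> * h" and ?q = "sqrt \<mu> * h"
    let ?c = "(1 - ?q) / (1 + ?q)"
    have F: "lipschitz_field (HR_field \<mu> \<beta> g h) K"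
      using HR_field_lipschitz[OF \<mu> \<beta> _ h(2) L g] h unfolding K_def by simp
    interpret lipschitz_field "HR_field \<mu> \<beta> g h" K by (rule F)
    have "norm (HR_field \<mu> \<beta> g h (z \<tau>)) \<le> M\<^sub>F" if "\<tau> \<in> {t..t+h}" for \<tau>
    proof -
      have "norm (z \<tau>) \<le> M" using bound that t h by auto
      then have "K * norm (z \<tau>) \<le> K * M" using K by (rule mult_left_mono)
      then show ?thesis
        using norm_F_le[of "z \<tau>"] HR_field_zero_bound[of \<mu> \<beta> h g] \<mu> \<beta> h unfolding M\<^sub>F_def by simp
    qed
    note increments = HR_integral_solution_increments[OF F z t(1) _ this g L, of A]
    have a: "\<bar>?a\<bar> \<le> A" unfolding A_def using HR_coefficient_bound[of \<mu> \<beta> h 1] \<mu> \<beta> h by simp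
    have q: "0 < ?q" using \<mu> h by simp
    note coeff = HR_step_coefficients[OF q \<beta>]
    have "norm (snd (z t)) \<le> M"
      using bound t h norm_snd_le[of "snd (z t)" "fst (z t)"] by (simp add: order_trans)
    moreover have "norm (g (fst (z (t + h)))) \<le> M\<^sub>g"
    proof -
      have "norm (fst (z (t + h))) \<le> M"
        using bound t h norm_fst_le[of "fst (z (t + h))" "snd (z (t + h))"] by (simp add: order_trans)
      then show ?thesis
        using norm_le_lipschitz[OF g, of "fst (z (t + h))"] mult_left_mono[OF _ L] unfolding M\<^sub>g_def
        by fastforce
    qed
    moreover have "\<bar>?c - 1 + h * (2 * sqrt \<mu>)\<bar> \<le> (2 * \<mu>) * h\<^sup>2"
      using coeff(3) \<mu> by (simp add: power_mult_distrib mult.commute mult.left_commute)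
    moreover have "\<bar>?a + (1 - \<beta> + \<beta> * ?c)\<bar> \<le> (5 * sqrt \<mu>) * h"
      using coeff(4) by (simp add: mult.commute mult.left_commute)
    ultimately have "dist_sum (semi_implicit_step h \<beta> (1 - \<beta> + \<beta> * ?c) ?c g (fst (z t), snd (z t)))
        (fst (z (t + h)), snd (z (t + h))) \<le> C * h\<^sup>2"
      unfolding C_def
      using semi_implicit_step_consistent[OF g L h coeff(2) increments(1) increments(2)] a h
      by auto
    then show ?thesis unfolding HR_step_def Let_def by simp
  qed
  ultimately show ?thesis by blast
qed

lemma HR_global_error:
  fixes g :: "real^'n \<Rightarrow> real^'n"
  assumes \<mu>: "0 < \<mu>" and \<beta>: "0 \<le> \<beta>" "\<beta> \<le> 1" and L: "0 \<le> L"
    and g: "\<And>x y. norm (g x - g y) \<le> L * norm (x - y)" and M: "0 \<le> M"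
  shows "\<exists>C. \<forall>s z. 0 < s \<longrightarrow> s \<le> 1 \<longrightarrow>
           integral_solution (HR_field \<mu> \<beta> g (sqrt s)) (HR_init \<mu> \<beta> g x0 (sqrt s)) z \<longrightarrow>
           (\<forall>\<tau>\<in>{0..T}. norm (z \<tau>) \<le> M) \<longrightarrow>
           (\<forall>k. real k * sqrt s \<le> T \<longrightarrow> norm (HR_seq \<mu> \<beta> s g x0 k - fst (z (real k * sqrt s))) \<le> C * sqrt s)"
proof -
  obtain C where C: "0 \<le> C" and local_error: "\<And>h z0 z t. 0 < h \<Longrightarrow> h \<le> 1 \<Longrightarrow>
      integral_solution (HR_field \<mu> \<beta> g h) z0 z \<Longrightarrow> (\<forall>\<tau>\<in>{0..T}. norm (z \<tau>) \<le> M) \<Longrightarrow>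
      0 \<le> t \<Longrightarrow> t + h \<le> T \<Longrightarrow> dist_sum (HR_step \<mu> \<beta> g h (z t)) (z (t + h)) \<le> C * h\<^sup>2"
    using HR_local_truncation_error[OF \<mu> \<beta> L g M, of T] by blast
  let ?Q = "(1 + L)\<^sup>2"
  have "norm (HR_seq \<mu> \<beta> s g x0 k - fst (z (real k * sqrt s))) \<le> (T * C * exp (T * ?Q)) * sqrt s"
    if s: "0 < s" "s \<le> 1"
      and z: "integral_solution (HR_field \<mu> \<beta> g (sqrt s)) (HR_init \<mu> \<beta> g x0 (sqrt s)) z"
      and bound: "\<forall>\<tau>\<in>{0..T}. norm (z \<tau>) \<le> M" and k: "real k * sqrt s \<le> T" for s z k
  proof -
    let ?h = "sqrt s"
    have h: "0 < ?h" "?h \<le> 1" using s by auto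
    define x where "x = HR_seq \<mu> \<beta> s g x0"
    define v where "v k = (1 / ?h) *\<^sub>R (x (Suc k) - x k) + (\<beta> * ?h) *\<^sub>R g (x k)" for k
    have "dist_sum (x k, v k) (z (real k * ?h)) \<le> real k * (C * ?h\<^sup>2) * exp (real k * ?h * ?Q)"
    proof (rule one_step_global_error[where \<Phi> = "HR_step \<mu> \<beta> g ?h" and d = dist_sum and n = k
          and y = "\<lambda>k. (x k, v k)" and Y = "\<lambda>j. z (real j * ?h)" and h = ?h and Q = ?Q and \<delta> = "C * ?h\<^sup>2"])
      show "dist_sum u w \<le> dist_sum u v + dist_sum v w" for u v w :: "(real^'n) \<times> (real^'n)"
        by (rule dist_sum_triangle)
      show "dist_sum (HR_step \<mu> \<beta> g ?h u) (HR_step \<mu> \<beta> g ?h w) \<le> (1 + ?h * ?Q) * dist_sum u w" for u w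
        by (rule HR_step_stable[OF \<mu> \<beta> h g L])
      show "dist_sum (HR_step \<mu> \<beta> g ?h (z (real j * ?h))) (z (real (Suc j) * ?h)) \<le> C * ?h\<^sup>2"
        if "j < k" for j
      proof -
        have "real (Suc j) * ?h \<le> real k * ?h" using that h by (intro mult_right_mono) auto
        then have "real j * ?h + ?h \<le> T" using k by (simp add: algebra_simps)
        then show ?thesis using local_error[OF h z bound, of "real j * ?h"] h
          by (simp add: algebra_simps)
      qed
      have "z 0 = HR_init \<mu> \<beta> g x0 ?h" using z by (simp add: integral_solution_def)
      then show "dist_sum (x 0, v 0) (z (real 0 * ?h)) \<le> 0"
        using HR_seq_eq_HR_step_iterate(1)[of s \<mu> \<beta> g x0, OF s(1)]
        by (simp add: x_def v_def dist_sum_def)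
      show "(x (Suc j), v (Suc j)) = HR_step \<mu> \<beta> g ?h (x j, v j)" for j
        using HR_seq_eq_HR_step_iterate(2)[of s \<mu> \<beta> g x0, OF s(1)] by (simp add: x_def v_def)
    qed (use h L C in auto)
    also have "\<dots> = (real k * ?h) * C * exp ((real k * ?h) * ?Q) * ?h"
      by (simp add: power2_eq_square algebra_simps)
    also have "\<dots> \<le> T * C * exp (T * ?Q) * ?h"
    proof -
      have "0 \<le> real k * ?h" using h by simp
      then have TC: "0 \<le> T * C" using k C by simp
      have "exp ((real k * ?h) * ?Q) \<le> exp (T * ?Q)"
        using k by (simp add: mult_right_mono)
      then have "(real k * ?h) * C * exp ((real k * ?h) * ?Q) \<le> T * C * exp (T * ?Q)"
        by (rule mult_mono[OF mult_right_mono[OF k C] _ TC]) simp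
      then show ?thesis by (rule mult_right_mono) (use h in simp)
    qed
    finally show ?thesis
      unfolding dist_sum_def x_def by (smt (verit) fst_conv norm_ge_zero)
  qed
  then show ?thesis by blast
qed

lemma HR_integral_solution_bounded:
  fixes g :: "'a::banach \<Rightarrow> 'a"
  assumes \<mu>: "0 < \<mu>" and \<beta>: "0 \<le> \<beta>" "\<beta> \<le> 1" and L: "0 \<le> L"
    and g: "\<And>x y. norm (g x - g y) \<le> L * norm (x - y)"
  shows "\<exists>M\<ge>0. \<forall>h z. 0 < h \<longrightarrow> h \<le> 1 \<longrightarrow> integral_solution (HR_field \<mu> \<beta> g h) (HR_init \<mu> \<beta> g x0 h) z \<longrightarrow>
           (\<forall>t\<in>{0..T}. norm (z t) \<le> M)"
proof -
  define K where "K = 1 + 2 * sqrt \<mu> + (2 + 3 * sqrt \<mu>) * L"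
  define M where "M = (2 * (norm x0 + 2 * norm (g x0)) + (2 + 3 * sqrt \<mu>) * norm (g 0)) * exp (2 * K * \<bar>T\<bar>)"
  have K: "1 \<le> K" unfolding K_def using L \<mu> by simp
  have "norm (z t) \<le> M"
    if h: "0 < h" "h \<le> 1" and z: "integral_solution (HR_field \<mu> \<beta> g h) (HR_init \<mu> \<beta> g x0 h) z"
      and t: "t \<in> {0..T}" for h z t
  proof -
    have F: "lipschitz_field (HR_field \<mu> \<beta> g h) K"
      using HR_field_lipschitz[OF \<mu> \<beta> _ h(2) L g] h unfolding K_def by simp
    interpret lipschitz_field "HR_field \<mu> \<beta> g h" K by (rule F)
    have "norm (HR_field \<mu> \<beta> g h 0) / K \<le> norm (HR_field \<mu> \<beta> g h 0)"
      using K by (simp add: divide_le_eq mult_le_cancel_left1) 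
    then have B: "2 * norm (HR_init \<mu> \<beta> g x0 h) + norm (HR_field \<mu> \<beta> g h 0) / K
        \<le> 2 * (norm x0 + 2 * norm (g x0)) + (2 + 3 * sqrt \<mu>) * norm (g 0)"
      using HR_init_bound[of \<mu> \<beta> h g x0] HR_field_zero_bound[of \<mu> \<beta> h g] \<mu> \<beta> h by simp
    have "exp (2 * K * t) \<le> exp (2 * K * \<bar>T\<bar>)" using t K by simp
    have "norm (z t) \<le> (2 * norm (HR_init \<mu> \<beta> g x0 h) + norm (HR_field \<mu> \<beta> g h 0) / K) * exp (2 * K * t)"
      using integral_solution_bound[OF z, of t] t by simp
    also have "\<dots> \<le> M"
      unfolding M_def by (rule mult_mono[OF B \<open>exp (2 * K * t) \<le> _\<close>]) (use \<mu> in simp_all)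
    finally show ?thesis .
  qed
  moreover have "0 \<le> M" unfolding M_def using \<mu> by simp
  ultimately show ?thesis by blast
qed

lemma HR_seq_error_bound:
  fixes g :: "real^'n \<Rightarrow> real^'n" and H :: "real^'n \<Rightarrow> real^'n^'n"
  assumes \<mu>: "0 < \<mu>" and \<beta>: "0 \<le> \<beta>" "\<beta> \<le> 1" and L: "0 \<le> L"
    and g: "\<And>x y. norm (g x - g y) \<le> L * norm (x - y)" and g': "\<And>x. (g has_derivative (\<lambda>v. H x *v v)) (at x)"
  shows "\<exists>C. \<forall>s Y. 0 < s \<longrightarrow> s \<le> 1 \<longrightarrow> HR_solution \<mu> \<beta> s g H x0 Y \<longrightarrow>
           (\<forall>k. real k * sqrt s \<le> T \<longrightarrow> norm (HR_seq \<mu> \<beta> s g x0 k - Y (real k * sqrt s)) \<le> C * sqrt s)"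
proof -
  obtain M where "0 \<le> M" and bounded: "\<And>h z. 0 < h \<Longrightarrow> h \<le> 1 \<Longrightarrow>
      integral_solution (HR_field \<mu> \<beta> g h) (HR_init \<mu> \<beta> g x0 h) z \<Longrightarrow> \<forall>t\<in>{0..T}. norm (z t) \<le> M"
    using HR_integral_solution_bounded[OF \<mu> \<beta> L g, of x0 T] by blast
  obtain C where error: "\<And>s z. 0 < s \<Longrightarrow> s \<le> 1 \<Longrightarrow>
      integral_solution (HR_field \<mu> \<beta> g (sqrt s)) (HR_init \<mu> \<beta> g x0 (sqrt s)) z \<Longrightarrow>
      \<forall>\<tau>\<in>{0..T}. norm (z \<tau>) \<le> M \<Longrightarrow>
      \<forall>k. real k * sqrt s \<le> T \<longrightarrow> norm (HR_seq \<mu> \<beta> s g x0 k - fst (z (real k * sqrt s))) \<le> C * sqrt s"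
    using HR_global_error[OF \<mu> \<beta> L g \<open>0 \<le> M\<close>, of x0 T] by blast
  have "norm (HR_seq \<mu> \<beta> s g x0 k - Y (real k * sqrt s)) \<le> C * sqrt s"
    if s: "0 < s" "s \<le> 1" and Y: "HR_solution \<mu> \<beta> s g H x0 Y" and k: "real k * sqrt s \<le> T" for s Y k
  proof -
    obtain w where z: "integral_solution (HR_field \<mu> \<beta> g (sqrt s)) (HR_init \<mu> \<beta> g x0 (sqrt s)) (\<lambda>t. (Y t, w t))"
      using HR_solution_imp_integral_solution[OF g' Y] by blast
    have "0 < sqrt s" "sqrt s \<le> 1" using s by auto
    from error[OF s z bounded[OF this z]] k show ?thesis by simp
  qed
  then show ?thesis by blast
qed

theorem proposition3p6:
  fixes \<mu> \<beta> :: real and x0 :: "real^'n" and f :: "real^'n \<Rightarrow> real"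
    and g :: "real^'n \<Rightarrow> real^'n" and H :: "real^'n \<Rightarrow> real^'n^'n"
  assumes "\<mu> > 0" and "0 \<le> \<beta>" and "\<beta> \<le> 1" and "S2_mu \<mu> f g H"
  shows "(\<forall>s>0. \<exists>X. HR_solution \<mu> \<beta> s g H x0 X \<and>
            (\<forall>Y. HR_solution \<mu> \<beta> s g H x0 Y \<longrightarrow> (\<forall>t\<ge>0. Y t = X t)))
         \<and> (\<forall>Xs :: real \<Rightarrow> real \<Rightarrow> real^'n.
              (\<forall>s>0. HR_solution \<mu> \<beta> s g H x0 (Xs s)) \<longrightarrow>
              (\<forall>T>0. Limsup (at_right 0)
                 (\<lambda>s. ereal (Max ((\<lambda>k. norm (HR_seq \<mu> \<beta> s g x0 k - Xs s (real k * sqrt s)))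
                                    ` {k::nat. real k \<le> T / sqrt s}))) = 0))"
proof -
  obtain L L' where "\<mu> \<le> L" and g: "\<And>x y. norm (g x - g y) \<le> L * norm (x - y)"
    and g': "\<And>x. (g has_derivative (\<lambda>v. H x *v v)) (at x)"
    and "\<And>x y. norm (H x - H y) \<le> L' * norm (x - y)" "0 < L'"
    using assms(4) unfolding S2_mu_def S2_muL_def by blast
  then have L: "0 \<le> L" and H: "continuous_on UNIV H"
    using assms(1) by (auto intro!: lipschitz_on_continuous_on[where L=L'] lipschitz_onI simp: dist_norm)
  have "Limsup (at_right 0) (\<lambda>s. ereal (Max ((\<lambda>k. norm (HR_seq \<mu> \<beta> s g x0 k - Xs s (real k * sqrt s)))
          ` {k::nat. real k \<le> T / sqrt s}))) = 0"
    if "\<forall>s>0. HR_solution \<mu> \<beta> s g H x0 (Xs s)" and "0 < T" for Xs :: "real \<Rightarrow> real \<Rightarrow> real^'n" and T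
  proof -
    obtain C where "\<And>s Y k. 0 < s \<Longrightarrow> s \<le> 1 \<Longrightarrow> HR_solution \<mu> \<beta> s g H x0 Y \<Longrightarrow>
        real k * sqrt s \<le> T \<Longrightarrow> norm (HR_seq \<mu> \<beta> s g x0 k - Y (real k * sqrt s)) \<le> C * sqrt s"
      using HR_seq_error_bound[OF assms(1-3) L g g', of x0 T] by blast
    with that show ?thesis by (intro Limsup_max_sampling_error_eq_0) auto
  qed
  then show ?thesis using HR_solution_exists_unique[OF assms(1-3) _ L g g' H] by blast
qed

end
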